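(* Let $L=L_A+L_B+L_C$ and consider the kicked field Ising chain of $L$ spins-$\tfrac12$ with periodic boundary conditions at the self-dual point $J=\pi/4$, $b=-\pi/4$, with arbitrary real longitudinal fields $h_1,\dots,h_L$. Let the initial state be a transverse-class product state $|\psi_{\pi/2,\phi}\rangle$, and let $\rho_{AB}(t)=\mathrm{tr}_C\big(U^t|\psi_{\pi/2,\phi}\rangle\langle\psi_{\pi/2,\phi}|U^{-t}\big)$. Then for every integer $t\ge 1$ with $2t\le \min(L_A,L_B,L_C)$ (in particular for $L_A,L_B,L_C$ sufficiently large) and every integer $n\ge 1$, $$\ln \mathrm{tr}\Big(\big(\rho_{AB}^{T_B}(t)\big)^{2n}\Big)=(4-6n)\,t\ln 2 .$$
   Context: Pauli matrices $\sigma^x_i,\sigma^z_i$ act on site $i$, with $\sigma_{L+1}\equiv\sigma_1$. The Hamiltonians are $H_I=J\sum_{i=1}^L\sigma^z_i\sigma^z_{i+1}+\sum_{i=1}^L h_i\sigma^z_i$ and $H_K=b\sum_{i=1}^L\sigma^x_i$; the Floquet (one-period) operator is $U=e^{-iH_K}e^{-iH_I}$. The product states are $|\psi_{\theta,\phi}\rangle=\bigotimes_{k=1}^L\big(\cos(\theta_k/2)|\uparrow\rangle+e^{i\phi_k}\sin(\theta_k/2)|\downarrow\rangle\big)$; the transverse class consists of the states with $\theta_k=\pi/2$ for all $k$ and a phase $\phi_k=\phi\in[0,2\pi]$. The chain is partitioned into contiguous blocks $A=\{1,\dots,L_A\}$, $B=\{L_A+1,\dots,L_A+L_B\}$, $C=\{L_A+L_B+1,\dots,L\}$.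 $\mathrm{tr}_C$ is the partial trace over $C$ and $(\cdot)^{T_B}$ denotes the partial transpose with respect to $B$ in the computational ($\sigma^z$) basis. *)

theory Defs
  imports "HOL-Analysis.Analysis"
begin

text \<open>Computational basis configurations of n spins: boolean lists of length n.
  Site k (0-based, paper's site k+1) is spin up iff s!k = True.
  Operators on n spins are functions bool list => bool list => complex (matrix elements).\<close>

definition configs :: "nat \<Rightarrow> bool list set" where
  "configs n = {s. length s = n}"

definition spinz :: "bool list \<Rightarrow> nat \<Rightarrow> real" where
  "spinz s i = (if s ! i then 1 else -1)"

definition ising_energy :: "nat \<Rightarrow> real \<Rightarrow> (nat \<Rightarrow> real) \<Rightarrow> bool list \<Rightarrow> real" where
  "ising_energy L J h s =
     J * (\<Sum>i<L. spinz s i * spinz s ((i + 1) mod L)) + (\<Sum>i<L. h i * spinz s i)"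

text \<open>Matrix element of exp(-i H_K) = tensor product of (cos b I - i sin b sigma^x).\<close>
definition kick_elem :: "nat \<Rightarrow> real \<Rightarrow> bool list \<Rightarrow> bool list \<Rightarrow> complex" where
  "kick_elem L b s' s =
     (\<Prod>i<L. if s' ! i = s ! i then complex_of_real (cos b) else - \<i> * complex_of_real (sin b))"

definition floquet :: "nat \<Rightarrow> real \<Rightarrow> real \<Rightarrow> (nat \<Rightarrow> real) \<Rightarrow> (bool list \<Rightarrow> complex) \<Rightarrow> (bool list \<Rightarrow> complex)" where
  "floquet L J b h \<psi> = (\<lambda>s'. \<Sum>s\<in>configs L.
      kick_elem L b s' s * exp (- \<i> * complex_of_real (ising_energy L J h s)) * \<psi> s)"

definition prod_state :: "nat \<Rightarrow> (nat \<Rightarrow> real) \<Rightarrow> (nat \<Rightarrow> real) \<Rightarrow> bool list \<Rightarrow> complex" where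
  "prod_state L \<theta> \<phi> s = (\<Prod>k<L. if s ! k then complex_of_real (cos (\<theta> k / 2))
                                   else exp (\<i> * complex_of_real (\<phi> k)) * complex_of_real (sin (\<theta> k / 2)))"

text \<open>Pure-state density matrix |v><v| (so U^t |psi><psi| U^{-t} with U^{-t} = (U^t)^dagger).\<close>
definition proj :: "(bool list \<Rightarrow> complex) \<Rightarrow> bool list \<Rightarrow> bool list \<Rightarrow> complex" where
  "proj v x y = v x * cnj (v y)"

definition ptrace_last :: "nat \<Rightarrow> (bool list \<Rightarrow> bool list \<Rightarrow> complex) \<Rightarrow> bool list \<Rightarrow> bool list \<Rightarrow> complex" where
  "ptrace_last m \<rho> x y = (\<Sum>c\<in>configs m. \<rho> (x @ c) (y @ c))"

definition ptranspose_after :: "nat \<Rightarrow> (bool list \<Rightarrow> bool list \<Rightarrow> complex) \<Rightarrow> bool list \<Rightarrow> bool list \<Rightarrow> complex" where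
  "ptranspose_after a \<rho> x y = \<rho> (take a x @ drop a y) (take a y @ drop a x)"

definition mat_mul :: "nat \<Rightarrow> (bool list \<Rightarrow> bool list \<Rightarrow> complex) \<Rightarrow> (bool list \<Rightarrow> bool list \<Rightarrow> complex) \<Rightarrow> bool list \<Rightarrow> bool list \<Rightarrow> complex" where
  "mat_mul n M N x y = (\<Sum>z\<in>configs n. M x z * N z y)"

fun mat_pow :: "nat \<Rightarrow> (bool list \<Rightarrow> bool list \<Rightarrow> complex) \<Rightarrow> nat \<Rightarrow> bool list \<Rightarrow> bool list \<Rightarrow> complex" where
  "mat_pow n M 0 = (\<lambda>x y. if x = y then 1 else 0)"
| "mat_pow n M (Suc k) = mat_mul n (mat_pow n M k) M"

definition mtrace :: "nat \<Rightarrow> (bool list \<Rightarrow> bool list \<Rightarrow> complex) \<Rightarrow> complex" where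
  "mtrace n M = (\<Sum>x\<in>configs n. M x x)"

definition rhoAB :: "nat \<Rightarrow> nat \<Rightarrow> nat \<Rightarrow> real \<Rightarrow> real \<Rightarrow> (nat \<Rightarrow> real) \<Rightarrow> real \<Rightarrow> nat \<Rightarrow> bool list \<Rightarrow> bool list \<Rightarrow> complex" where
  "rhoAB LA LB LC J b h \<phi> t =
     ptrace_last LC (proj ((floquet (LA + LB + LC) J b h ^^ t)
                             (prod_state (LA + LB + LC) (\<lambda>_. pi / 2) (\<lambda>_. \<phi>))))"

end

(*
  U^t applied to the product state is a tensor network whose bond variables are the spin
  histories of the sites (the worldlines below the current time), so splitting the ring into
  A, B, C writes the state as a trace over three segment matrices A x_A gamma delta,
  B x_B delta beta, C x_C beta gamma acting on histories of length t.

  At the self-dual point the kick and the Ising gate are dual-unitary, and a segment of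
  length at least 2t is then an isometry up to the factor 2^-t from its two boundary
  histories to its spins. In the folded picture (ket and bra history side by side) this is
  a sign-reversing involution: flipping a vertex at which the ket and bra histories
  differ with odd parity reverses the sign of the folded weight, and a light-cone argument
  shows that only equal histories admit no such vertex.

  Tracing out C and transposing B therefore gives
  rho^T_B = 2^-t sum_iota |u_iota><w_iota|, whose two families are biorthogonal up to the
  swap of the two A|B bonds with overlaps 2^-2t. Hence rho^T_B squared is 2^-4t P with
  P^2 = 2^-2t P and tr P = 2^2t, and tr (rho^T_B)^2n = 2^4t 2^-6nt.
*)


theory Submission
  imports Defs
begin


section \<open>Matrices indexed by spin configurations\<close>

lemma finite_configs [simp]: "finite (configs n)"
proof -
  have "configs n = {xs. set xs \<subseteq> (UNIV :: bool set) \<and> length xs = n}"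
    unfolding configs_def by auto
  then show ?thesis by (simp only:) (rule finite_lists_length_eq, simp)
qed

lemma card_configs: "card (configs n) = 2 ^ n"
proof -
  have "configs n = {xs. set xs \<subseteq> (UNIV :: bool set) \<and> length xs = n}"
    unfolding configs_def by auto
  then show ?thesis by (simp only: card_lists_length_eq finite card_UNIV_bool)
qed

lemma sum_configs_add:
  "(\<Sum>x\<in>configs (m + n). f x) = (\<Sum>u\<in>configs m. \<Sum>v\<in>configs n. f (u @ v))"
proof -
  have "(\<Sum>u\<in>configs m. \<Sum>v\<in>configs n. f (u @ v)) = (\<Sum>(u, v)\<in>configs m \<times> configs n. f (u @ v))"
    by (rule sum.cartesian_product)
  also have "\<dots> = (\<Sum>x\<in>configs (m + n). f x)"
    by (rule sum.reindex_bij_witness[where j = "\<lambda>(u, v). u @ v" and i = "\<lambda>x. (take m x, drop m x)"])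
      (auto simp: configs_def)
  finally show ?thesis by simp
qed

lemma mat_mul_assoc: "mat_mul n (mat_mul n A B) C x y = mat_mul n A (mat_mul n B C) x y"
  unfolding mat_mul_def by (simp add: sum_distrib_left sum_distrib_right mult.assoc) (rule sum.swap)

lemma mat_mul_cong:
  assumes "\<And>z. z \<in> configs n \<Longrightarrow> A x z = A' x z" "\<And>z. z \<in> configs n \<Longrightarrow> B z y = B' z y"
  shows "mat_mul n A B x y = mat_mul n A' B' x y"
  unfolding mat_mul_def using assms by (intro sum.cong) auto

lemma mat_mul_one_left:
  assumes "x \<in> configs n"
  shows "mat_mul n (\<lambda>x y. if x = y then 1 else 0) B x y = B x y"
proof -
  have "mat_mul n (\<lambda>x y. if x = y then 1 else 0) B x y = (\<Sum>z\<in>configs n. if x = z then B z y else 0)"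
    unfolding mat_mul_def by (intro sum.cong) auto
  then show ?thesis using assms by (simp add: sum.delta)
qed

lemma mat_pow_cong:
  assumes "\<And>x y. x \<in> configs n \<Longrightarrow> y \<in> configs n \<Longrightarrow> M x y = M' x y"
    and "x \<in> configs n" "y \<in> configs n"
  shows "mat_pow n M k x y = mat_pow n M' k x y"
  using assms(2,3)
proof (induction k arbitrary: y)
  case (Suc k)
  show ?case
    unfolding mat_pow.simps by (rule mat_mul_cong) (simp_all add: assms(1) Suc)
qed simp

lemma mat_pow_double:
  assumes "x \<in> configs n" "y \<in> configs n"
  shows "mat_pow n M (2 * k) x y = mat_pow n (mat_mul n M M) k x y"
  using assms(2)
proof (induction k arbitrary: y)
  case 0
  then show ?case by simp
next
  case (Suc k)
  have "mat_pow n M (2 * Suc k) x y = mat_mul n (mat_mul n (mat_pow n M (2 * k)) M) M x y"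
    by simp
  also have "\<dots> = mat_mul n (mat_pow n M (2 * k)) (mat_mul n M M) x y"
    by (rule mat_mul_assoc)
  also have "\<dots> = mat_mul n (mat_pow n (mat_mul n M M) k) (mat_mul n M M) x y"
    by (rule mat_mul_cong) (simp_all add: Suc.IH)
  finally show ?case by simp
qed

lemma mat_mul_sum_outer:
  "mat_mul n (\<lambda>x y. \<Sum>i\<in>I. U i x * W i y) (\<lambda>x y. \<Sum>j\<in>J. U' j x * W' j y) x y
   = (\<Sum>i\<in>I. \<Sum>j\<in>J. U i x * (\<Sum>z\<in>configs n. W i z * U' j z) * W' j y)"
proof -
  have "mat_mul n (\<lambda>x y. \<Sum>i\<in>I. U i x * W i y) (\<lambda>x y. \<Sum>j\<in>J. U' j x * W' j y) x y
      = (\<Sum>z\<in>configs n. \<Sum>i\<in>I. \<Sum>j\<in>J. U i x * W i z * (U' j z * W' j y))"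
    unfolding mat_mul_def by (simp add: sum_product)
  also have "\<dots> = (\<Sum>i\<in>I. \<Sum>j\<in>J. \<Sum>z\<in>configs n. U i x * W i z * (U' j z * W' j y))"
    by (subst sum.swap) (intro sum.cong refl, rule sum.swap)
  also have "\<dots> = (\<Sum>i\<in>I. \<Sum>j\<in>J. U i x * (\<Sum>z\<in>configs n. W i z * U' j z) * W' j y)"
    by (simp add: sum_distrib_left sum_distrib_right mult_ac)
  finally show ?thesis .
qed

lemma mat_mul_biorthogonal:
  assumes I: "finite I" and f: "\<And>\<iota>. \<iota> \<in> I \<Longrightarrow> f \<iota> \<in> I" and \<sigma>: "\<And>\<iota>. \<iota> \<in> I \<Longrightarrow> \<sigma> \<iota> \<in> I"
    and biorth: "\<And>\<iota> \<kappa>. \<iota> \<in> I \<Longrightarrow> \<kappa> \<in> I \<Longrightarrow>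
      (\<Sum>z\<in>configs n. w \<iota> z * u \<kappa> z) = (if \<kappa> = \<sigma> \<iota> then \<mu> else 0)"
  shows "mat_mul n (\<lambda>x y. \<Sum>\<iota>\<in>I. u \<iota> x * w (f \<iota>) y) (\<lambda>x y. \<Sum>\<kappa>\<in>I. u \<kappa> x * w (g \<kappa>) y) x y
    = \<mu> * (\<Sum>\<iota>\<in>I. u \<iota> x * w (g (\<sigma> (f \<iota>))) y)"
proof -
  have "mat_mul n (\<lambda>x y. \<Sum>\<iota>\<in>I. u \<iota> x * w (f \<iota>) y) (\<lambda>x y. \<Sum>\<kappa>\<in>I. u \<kappa> x * w (g \<kappa>) y) x y
      = (\<Sum>\<iota>\<in>I. \<Sum>\<kappa>\<in>I. if \<kappa> = \<sigma> (f \<iota>) then \<mu> * (u \<iota> x * w (g \<kappa>) y) else 0)"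
    unfolding mat_mul_sum_outer using f by (intro sum.cong refl) (simp add: biorth)
  also have "\<dots> = \<mu> * (\<Sum>\<iota>\<in>I. u \<iota> x * w (g (\<sigma> (f \<iota>))) y)"
    using I f \<sigma> by (simp add: sum.delta' sum_distrib_left)
  finally show ?thesis .
qed

lemma mat_pow_Suc_scaled_idempotent:
  assumes PP: "\<And>x y. mat_mul n P P x y = \<mu> * P x y" and x: "x \<in> configs n"
  shows "mat_pow n (\<lambda>x y. a * P x y) (Suc j) x y = a ^ Suc j * \<mu> ^ j * P x y"
proof (induction j arbitrary: y)
  case 0
  then show ?case using x by (simp add: mat_mul_one_left)
next
  case (Suc j)
  have "mat_pow n (\<lambda>x y. a * P x y) (Suc (Suc j)) x y = (\<Sum>z\<in>configs n. a ^ Suc j * \<mu> ^ j * P x z * (a * P z y))"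
    unfolding mat_pow.simps(2)[of _ _ "Suc j"] mat_mul_def Suc.IH ..
  also have "\<dots> = a ^ Suc j * \<mu> ^ j * a * mat_mul n P P x y"
    by (simp add: mat_mul_def sum_distrib_left mult_ac)
  finally show ?case by (simp add: PP)
qed

text \<open>An operator \<open>R = c \<Sum>\<^sub>\<iota> |u\<^sub>\<iota>\<rangle>\<langle>w\<^sub>\<iota>|\<close> whose families are biorthogonal up to an involution
  \<open>\<sigma>\<close> squares to \<open>c\<^sup>2 \<mu> P\<close> with \<open>P = \<Sum>\<^sub>\<iota> |u\<^sub>\<iota>\<rangle>\<langle>w\<^sub>\<sigma>\<^sub>\<iota>|\<close> and \<open>P\<^sup>2 = \<mu> P\<close>.\<close>

lemma mtrace_mat_pow_even_biorthogonal:
  fixes u w :: "'i \<Rightarrow> bool list \<Rightarrow> complex"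
  assumes I: "finite I"
    and R: "\<And>x y. x \<in> configs n \<Longrightarrow> y \<in> configs n \<Longrightarrow> R x y = c * (\<Sum>\<iota>\<in>I. u \<iota> x * w \<iota> y)"
    and \<sigma>: "\<And>\<iota>. \<iota> \<in> I \<Longrightarrow> \<sigma> \<iota> \<in> I" "\<And>\<iota>. \<iota> \<in> I \<Longrightarrow> \<sigma> (\<sigma> \<iota>) = \<iota>"
    and biorth: "\<And>\<iota> \<kappa>. \<iota> \<in> I \<Longrightarrow> \<kappa> \<in> I \<Longrightarrow>
      (\<Sum>z\<in>configs n. w \<iota> z * u \<kappa> z) = (if \<kappa> = \<sigma> \<iota> then \<mu> else 0)"
    and k: "1 \<le> k"
  shows "mtrace n (mat_pow n R (2 * k)) = of_nat (card I) * (c * \<mu>) ^ (2 * k)"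
proof -
  define P where "P x y = (\<Sum>\<iota>\<in>I. u \<iota> x * w (\<sigma> \<iota>) y)" for x y
  have RR: "mat_mul n R R x y = c\<^sup>2 * \<mu> * P x y" if "x \<in> configs n" "y \<in> configs n" for x y
  proof -
    have "mat_mul n R R x y = c\<^sup>2 * mat_mul n (\<lambda>x y. \<Sum>\<iota>\<in>I. u \<iota> x * w (id \<iota>) y) (\<lambda>x y. \<Sum>\<kappa>\<in>I. u \<kappa> x * w (id \<kappa>) y) x y"
      using that by (simp add: R mat_mul_def sum_distrib_left power2_eq_square mult_ac)
    then show ?thesis
      using mat_mul_biorthogonal[of I id \<sigma>, OF I _ \<sigma>(1) biorth] by (simp add: P_def)
  qed
  have PP: "mat_mul n P P x y = \<mu> * P x y" for x y
    using mat_mul_biorthogonal[of I \<sigma> \<sigma>, OF I \<sigma>(1) \<sigma>(1) biorth] \<sigma>(2) unfolding P_def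
    by (simp cong: sum.cong)
  obtain j where j: "k = Suc j" using k by (cases k) auto
  have "mtrace n (mat_pow n R (2 * k)) = (\<Sum>x\<in>configs n. mat_pow n (\<lambda>x y. c\<^sup>2 * \<mu> * P x y) k x x)"
    unfolding mtrace_def
    by (intro sum.cong refl) (simp add: mat_pow_double RR mat_pow_cong[of n "mat_mul n R R"])
  also have "\<dots> = (\<Sum>x\<in>configs n. (c\<^sup>2 * \<mu>) ^ Suc j * \<mu> ^ j * P x x)"
    unfolding j by (rule sum.cong[OF refl]) (rule mat_pow_Suc_scaled_idempotent[OF PP])
  also have "\<dots> = (c\<^sup>2 * \<mu>) ^ Suc j * \<mu> ^ j * (\<Sum>\<iota>\<in>I. \<Sum>z\<in>configs n. u \<iota> z * w (\<sigma> \<iota>) z)"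
    unfolding P_def sum_distrib_left[symmetric] by (rule arg_cong, rule sum.swap)
  also have "\<dots> = of_nat (card I) * (c * \<mu>) ^ (2 * k)"
  proof -
    have "(\<Sum>z\<in>configs n. u \<iota> z * w (\<sigma> \<iota>) z) = \<mu>" if "\<iota> \<in> I" for \<iota>
      using biorth[of "\<sigma> \<iota>" \<iota>] \<sigma> that by (simp add: mult.commute)
    then show ?thesis
      unfolding j by (simp add: power_mult_distrib power_mult power2_eq_square mult_ac)
  qed
  finally show ?thesis .
qed

section \<open>The kicked Ising evolution as a sum over spin histories\<close>

definition spin_sign :: "bool \<Rightarrow> real" where
  "spin_sign a = (if a then 1 else -1)"

definition kick_gate :: "real \<Rightarrow> bool \<Rightarrow> bool \<Rightarrow> complex" where
  "kick_gate b a a' = (if a = a' then complex_of_real (cos b) else - \<i> * complex_of_real (sin b))"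

definition ising_gate :: "real \<Rightarrow> bool \<Rightarrow> bool \<Rightarrow> complex" where
  "ising_gate J a a' = exp (- \<i> * complex_of_real (J * (spin_sign a * spin_sign a')))"

definition field_phase :: "real \<Rightarrow> bool \<Rightarrow> complex" where
  "field_phase hh a = exp (- \<i> * complex_of_real (hh * spin_sign a))"

definition site_amp :: "(nat \<Rightarrow> real) \<Rightarrow> (nat \<Rightarrow> real) \<Rightarrow> nat \<Rightarrow> bool \<Rightarrow> complex" where
  "site_amp \<theta> \<phi> k a = (if a then complex_of_real (cos (\<theta> k / 2))
                        else exp (\<i> * complex_of_real (\<phi> k)) * complex_of_real (sin (\<theta> k / 2)))"

text \<open>A worldline lists the spins of one site at times \<open>t, t - 1, \<dots>, 0\<close>; \<open>v\<close> is the initial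
  single-site amplitude.\<close>

fun worldline_amp :: "real \<Rightarrow> real \<Rightarrow> (bool \<Rightarrow> complex) \<Rightarrow> bool list \<Rightarrow> complex" where
  "worldline_amp b hh v [] = 0"
| "worldline_amp b hh v [a] = v a"
| "worldline_amp b hh v (a # a' # e) =
     kick_gate b a a' * field_phase hh a' * worldline_amp b hh v (a' # e)"

definition bond_amp :: "real \<Rightarrow> bool list \<Rightarrow> bool list \<Rightarrow> complex" where
  "bond_amp J c d = (\<Prod>q<length c. ising_gate J (c ! q) (d ! q))"

definition network_amp ::
    "real \<Rightarrow> real \<Rightarrow> (nat \<Rightarrow> real) \<Rightarrow> (nat \<Rightarrow> bool \<Rightarrow> complex) \<Rightarrow> nat \<Rightarrow> nat \<Rightarrow> bool list \<Rightarrow> complex" where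
  "network_amp J b h v L t s = (\<Sum>W\<in>PiE {..<L} (\<lambda>_. configs t).
      \<Prod>i<L. worldline_amp b (h i) (v i) (s ! i # W i) * bond_amp J (W i) (W ((i + 1) mod L)))"

lemma bond_amp_Cons [simp]: "bond_amp J (a # c) (a' # d) = ising_gate J a a' * bond_amp J c d"
  unfolding bond_amp_def by (simp add: prod.lessThan_Suc_shift del: prod.lessThan_Suc)

lemma worldline_amp_closed:
  "e \<noteq> [] \<Longrightarrow> worldline_amp b hh v e =
     v (last e) * (\<Prod>q<length e - 1. kick_gate b (e ! q) (e ! Suc q) * field_phase hh (e ! Suc q))"
  by (induction b hh v e rule: worldline_amp.induct)
    (simp_all add: prod.lessThan_Suc_shift del: prod.lessThan_Suc)

lemma ising_gate_abs: "ising_gate J a a' * cnj (ising_gate J a a') = 1"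
  by (simp add: ising_gate_def exp_cnj exp_add[symmetric])

lemma field_phase_abs: "field_phase hh a * cnj (field_phase hh a) = 1"
  by (simp add: field_phase_def exp_cnj exp_add[symmetric])

lemma kick_elem_eq_prod: "kick_elem L b s' s = (\<Prod>i<L. kick_gate b (s' ! i) (s ! i))"
  unfolding kick_elem_def kick_gate_def ..

lemma exp_ising_energy:
  "exp (- \<i> * complex_of_real (ising_energy L J h s)) =
     (\<Prod>i<L. ising_gate J (s ! i) (s ! ((i + 1) mod L))) * (\<Prod>i<L. field_phase (h i) (s ! i))"
proof -
  have "- \<i> * complex_of_real (ising_energy L J h s) =
      (\<Sum>i<L. - \<i> * complex_of_real (J * (spin_sign (s ! i) * spin_sign (s ! ((i + 1) mod L)))))
    + (\<Sum>i<L. - \<i> * complex_of_real (h i * spin_sign (s ! i)))"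
    unfolding ising_energy_def spinz_def spin_sign_def
    by (simp add: sum_distrib_left distrib_left mult_ac)
  then show ?thesis
    by (simp add: exp_add exp_sum ising_gate_def field_phase_def)
qed

lemma sum_PiE_configs_Suc:
  "(\<Sum>s\<in>configs L. \<Sum>W\<in>PiE {..<L} (\<lambda>_. configs t). G (\<lambda>i\<in>{..<L}. s ! i # W i))
   = (\<Sum>W\<in>PiE {..<L} (\<lambda>_. configs (Suc t)). G W)"
proof -
  have "(\<Sum>s\<in>configs L. \<Sum>W\<in>PiE {..<L} (\<lambda>_. configs t). G (\<lambda>i\<in>{..<L}. s ! i # W i))
      = (\<Sum>(s, W)\<in>configs L \<times> PiE {..<L} (\<lambda>_. configs t). G (\<lambda>i\<in>{..<L}. s ! i # W i))"
    by (rule sum.cartesian_product)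
  also have "\<dots> = (\<Sum>W\<in>PiE {..<L} (\<lambda>_. configs (Suc t)). G W)"
  proof (rule sum.reindex_bij_witness[where j = "\<lambda>(s, W). \<lambda>i\<in>{..<L}. s ! i # W i"
        and i = "\<lambda>W. (map (\<lambda>k. hd (W k)) [0..<L], \<lambda>k\<in>{..<L}. tl (W k))"])
    fix p assume "p \<in> configs L \<times> PiE {..<L} (\<lambda>_. configs t)"
    then obtain s W where p: "p = (s, W)" "length s = L" "W \<in> PiE {..<L} (\<lambda>_. configs t)"
      by (auto simp: configs_def)
    have "map (\<lambda>k. hd ((\<lambda>i\<in>{..<L}. s ! i # W i) k)) [0..<L] = s"
      using p(2) by (intro nth_equalityI) auto
    moreover have "(\<lambda>k\<in>{..<L}. tl ((\<lambda>i\<in>{..<L}. s ! i # W i) k)) = W"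
      using p(3) by (auto simp: PiE_iff extensional_def fun_eq_iff)
    ultimately show "(\<lambda>W. (map (\<lambda>k. hd (W k)) [0..<L], \<lambda>k\<in>{..<L}. tl (W k)))
        ((\<lambda>(s, W). \<lambda>i\<in>{..<L}. s ! i # W i) p) = p"
      using p(1) by simp
    show "(\<lambda>(s, W). \<lambda>i\<in>{..<L}. s ! i # W i) p \<in> PiE {..<L} (\<lambda>_. configs (Suc t))"
      using p by (auto simp: configs_def PiE_iff)
  next
    fix W assume W: "W \<in> PiE {..<L} (\<lambda>_. configs (Suc t))"
    have "W k \<noteq> []" if "k < L" for k
    proof -
      have "length (W k) = Suc t" using W that by (auto simp: configs_def PiE_iff)
      then show ?thesis by auto
    qed
    with W show "(\<lambda>(s, W). \<lambda>i\<in>{..<L}. s ! i # W i) (map (\<lambda>k. hd (W k)) [0..<L], \<lambda>k\<in>{..<L}. tl (W k)) = W"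
      by (auto simp: PiE_iff extensional_def fun_eq_iff)
    show "(map (\<lambda>k. hd (W k)) [0..<L], \<lambda>k\<in>{..<L}. tl (W k)) \<in> configs L \<times> PiE {..<L} (\<lambda>_. configs t)"
      using W by (auto simp: configs_def PiE_iff)
  qed auto
  finally show ?thesis .
qed

lemma floquet_network_amp:
  assumes "1 \<le> L"
  shows "floquet L J b h (network_amp J b h v L t) s = network_amp J b h v L (Suc t) s"
proof -
  define G where "G W = (\<Prod>i<L. worldline_amp b (h i) (v i) (s ! i # W i) * bond_amp J (W i) (W ((i + 1) mod L)))"
    for W
  have "floquet L J b h (network_amp J b h v L t) s
      = (\<Sum>s'\<in>configs L. \<Sum>W\<in>PiE {..<L} (\<lambda>_. configs t).
          (\<Prod>i<L. kick_gate b (s ! i) (s' ! i)) *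
          ((\<Prod>i<L. ising_gate J (s' ! i) (s' ! ((i + 1) mod L))) * (\<Prod>i<L. field_phase (h i) (s' ! i))) *
          (\<Prod>i<L. worldline_amp b (h i) (v i) (s' ! i # W i) * bond_amp J (W i) (W ((i + 1) mod L))))"
    unfolding floquet_def kick_elem_eq_prod exp_ising_energy network_amp_def by (simp add: sum_distrib_left)
  also have "\<dots> = (\<Sum>s'\<in>configs L. \<Sum>W\<in>PiE {..<L} (\<lambda>_. configs t). G (\<lambda>i\<in>{..<L}. s' ! i # W i))"
  proof (intro sum.cong refl)
    fix s' W
    have "(i + 1) mod L < L" for i using assms by simp
    then have "G (\<lambda>i\<in>{..<L}. s' ! i # W i) =
        (\<Prod>i<L. kick_gate b (s ! i) (s' ! i) * ising_gate J (s' ! i) (s' ! ((i + 1) mod L)) *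
          field_phase (h i) (s' ! i) *
          (worldline_amp b (h i) (v i) (s' ! i # W i) * bond_amp J (W i) (W ((i + 1) mod L))))"
      unfolding G_def using assms by (intro prod.cong refl) (auto simp: mult_ac)
    then show "(\<Prod>i<L. kick_gate b (s ! i) (s' ! i)) *
          ((\<Prod>i<L. ising_gate J (s' ! i) (s' ! ((i + 1) mod L))) * (\<Prod>i<L. field_phase (h i) (s' ! i))) *
          (\<Prod>i<L. worldline_amp b (h i) (v i) (s' ! i # W i) * bond_amp J (W i) (W ((i + 1) mod L)))
        = G (\<lambda>i\<in>{..<L}. s' ! i # W i)"
      by (simp add: prod.distrib mult_ac)
  qed
  also have "\<dots> = network_amp J b h v L (Suc t) s"
    by (simp only: sum_PiE_configs_Suc) (simp add: network_amp_def G_def)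
  finally show ?thesis .
qed

lemma prod_state_eq_network_amp:
  "prod_state L \<theta> \<phi> s = network_amp J b h (site_amp \<theta> \<phi>) L 0 s"
proof -
  have "PiE {..<L} (\<lambda>_. configs 0) = {\<lambda>i\<in>{..<L}. []}"
    by (simp add: configs_def PiE_singleton[symmetric])
  then show ?thesis
    unfolding network_amp_def prod_state_def by (simp add: site_amp_def bond_amp_def)
qed

lemma floquet_cong:
  assumes "\<And>x. x \<in> configs L \<Longrightarrow> \<psi> x = \<psi>' x"
  shows "floquet L J b h \<psi> s = floquet L J b h \<psi>' s"
  unfolding floquet_def using assms by (intro sum.cong refl) simp_all

lemma floquet_power_prod_state:
  assumes "1 \<le> L" "s \<in> configs L"
  shows "(floquet L J b h ^^ t) (prod_state L \<theta> \<phi>) s = network_amp J b h (site_amp \<theta> \<phi>) L t s"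
  using assms(2)
proof (induction t arbitrary: s)
  case 0
  then show ?case by (simp add: prod_state_eq_network_amp)
next
  case (Suc t)
  have "(floquet L J b h ^^ Suc t) (prod_state L \<theta> \<phi>) s
      = floquet L J b h (network_amp J b h (site_amp \<theta> \<phi>) L t) s"
    by simp (rule floquet_cong, rule Suc.IH)
  also have "\<dots> = network_amp J b h (site_amp \<theta> \<phi>) L (Suc t) s"
    by (rule floquet_network_amp[OF assms(1)])
  finally show ?case .
qed

section \<open>Transfer matrices along the chain\<close>

text \<open>\<open>path_sum t F m \<alpha> \<beta>\<close> is the \<open>(\<alpha>, \<beta>)\<close> entry of the product \<open>F 0 \<cdots> F (m - 1)\<close> of
  transfer matrices indexed by \<open>configs t\<close>, written as a sum over paths.\<close>

definition paths :: "nat \<Rightarrow> nat \<Rightarrow> bool list \<Rightarrow> bool list \<Rightarrow> (nat \<Rightarrow> bool list) set" where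
  "paths t m \<alpha> \<beta> = {K \<in> PiE {..m} (\<lambda>_. configs t). K 0 = \<alpha> \<and> K m = \<beta>}"

definition path_sum ::
    "nat \<Rightarrow> (nat \<Rightarrow> bool list \<Rightarrow> bool list \<Rightarrow> complex) \<Rightarrow> nat \<Rightarrow> bool list \<Rightarrow> bool list \<Rightarrow> complex" where
  "path_sum t F m \<alpha> \<beta> = (\<Sum>K\<in>paths t m \<alpha> \<beta>. \<Prod>j<m. F j (K j) (K (Suc j)))"

lemma finite_paths [simp]: "finite (paths t m \<alpha> \<beta>)"
  unfolding paths_def by (rule finite_subset[OF _ finite_PiE[of "{..m}" "\<lambda>_. configs t"]]) auto

lemma length_path: "K \<in> paths t m \<alpha> \<beta> \<Longrightarrow> j \<le> m \<Longrightarrow> length (K j) = t"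
  unfolding paths_def configs_def by (auto simp: PiE_iff)

lemma path_sum_0: "\<alpha> \<in> configs t \<Longrightarrow> path_sum t F 0 \<alpha> \<beta> = (if \<alpha> = \<beta> then 1 else 0)"
proof -
  have "K \<in> PiE {..0} (\<lambda>_. configs t) \<Longrightarrow> K = (\<lambda>i\<in>{..0::nat}. K 0)" for K
    by (auto simp: PiE_iff extensional_def fun_eq_iff)
  then have "paths t 0 \<alpha> \<beta> = (if \<alpha> = \<beta> \<and> \<alpha> \<in> configs t then {\<lambda>i\<in>{..0}. \<alpha>} else {})"
    unfolding paths_def by (auto simp: PiE_iff)
  then show "\<alpha> \<in> configs t \<Longrightarrow> ?thesis" by (simp add: path_sum_def)
qed

lemma path_sum_Suc:
  assumes "\<alpha> \<in> configs t"
  shows "path_sum t F (Suc m) \<alpha> \<beta> = (\<Sum>c\<in>configs t. F 0 \<alpha> c * path_sum t (\<lambda>j. F (Suc j)) m c \<beta>)"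
proof -
  define cons :: "bool list \<times> (nat \<Rightarrow> bool list) \<Rightarrow> nat \<Rightarrow> bool list"
    where "cons = (\<lambda>(c, K). \<lambda>i\<in>{..Suc m}. if i = 0 then \<alpha> else K (i - 1))"
  have "(\<Sum>c\<in>configs t. F 0 \<alpha> c * path_sum t (\<lambda>j. F (Suc j)) m c \<beta>)
      = (\<Sum>(c, K)\<in>Sigma (configs t) (\<lambda>c. paths t m c \<beta>). F 0 \<alpha> c * (\<Prod>j<m. F (Suc j) (K j) (K (Suc j))))"
    unfolding path_sum_def by (simp add: sum_distrib_left sum.Sigma)
  also have "\<dots> = path_sum t F (Suc m) \<alpha> \<beta>"
    unfolding path_sum_def
  proof (rule sum.reindex_bij_witness[where j = cons and i = "\<lambda>K. (K 1, \<lambda>i\<in>{..m}. K (Suc i))"])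
    fix p assume "p \<in> Sigma (configs t) (\<lambda>c. paths t m c \<beta>)"
    then obtain c K where p: "p = (c, K)" "c \<in> configs t" "K \<in> PiE {..m} (\<lambda>_. configs t)" "K 0 = c" "K m = \<beta>"
      unfolding paths_def by auto
    show "(\<lambda>K. (K 1, \<lambda>i\<in>{..m}. K (Suc i))) (cons p) = p"
      using p by (auto simp: cons_def PiE_iff extensional_def fun_eq_iff)
    show "cons p \<in> paths t (Suc m) \<alpha> \<beta>"
      using p assms by (auto simp: cons_def paths_def PiE_iff)
    show "(\<Prod>j<Suc m. F j (cons p j) (cons p (Suc j))) = (case p of (c, K) \<Rightarrow> F 0 \<alpha> c * (\<Prod>j<m. F (Suc j) (K j) (K (Suc j))))"
      using p by (simp add: cons_def prod.lessThan_Suc_shift del: prod.lessThan_Suc)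
  next
    fix K assume "K \<in> paths t (Suc m) \<alpha> \<beta>"
    then have K: "K \<in> PiE {..Suc m} (\<lambda>_. configs t)" "K 0 = \<alpha>" "K (Suc m) = \<beta>"
      unfolding paths_def by auto
    then show "cons ((\<lambda>K. (K 1, \<lambda>i\<in>{..m}. K (Suc i))) K) = K"
      by (auto simp: cons_def PiE_iff extensional_def fun_eq_iff gr0_conv_Suc)
    show "(\<lambda>K. (K 1, \<lambda>i\<in>{..m}. K (Suc i))) K \<in> Sigma (configs t) (\<lambda>c. paths t m c \<beta>)"
      using K unfolding paths_def by (auto simp: PiE_iff)
  qed
  finally show ?thesis by simp
qed

lemma path_sum_cong:
  assumes "\<And>j c d. j < m \<Longrightarrow> F j c d = G j c d"
  shows "path_sum t F m \<alpha> \<beta> = path_sum t G m \<alpha> \<beta>"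
  unfolding path_sum_def using assms by (intro sum.cong prod.cong) auto

lemma path_sum_add:
  assumes "\<alpha> \<in> configs t"
  shows "path_sum t F (m + n) \<alpha> \<beta> =
    (\<Sum>\<delta>\<in>configs t. path_sum t F m \<alpha> \<delta> * path_sum t (\<lambda>j. F (m + j)) n \<delta> \<beta>)"
  using assms
proof (induction m arbitrary: F \<alpha>)
  case 0
  have "(\<Sum>\<delta>\<in>configs t. path_sum t F 0 \<alpha> \<delta> * path_sum t (\<lambda>j. F (0 + j)) n \<delta> \<beta>)
      = (\<Sum>\<delta>\<in>configs t. if \<alpha> = \<delta> then path_sum t F n \<delta> \<beta> else 0)"
    using 0 by (intro sum.cong refl) (simp add: path_sum_0)
  then show ?case using 0 by (simp add: sum.delta)
next
  case (Suc m)
  have "path_sum t F (Suc m + n) \<alpha> \<beta>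
      = (\<Sum>c\<in>configs t. F 0 \<alpha> c * (\<Sum>\<delta>\<in>configs t.
          path_sum t (\<lambda>j. F (Suc j)) m c \<delta> * path_sum t (\<lambda>j. F (Suc (m + j))) n \<delta> \<beta>))"
    using Suc by (simp add: path_sum_Suc)
  also have "\<dots> = (\<Sum>\<delta>\<in>configs t. (\<Sum>c\<in>configs t. F 0 \<alpha> c * path_sum t (\<lambda>j. F (Suc j)) m c \<delta>)
      * path_sum t (\<lambda>j. F (Suc (m + j))) n \<delta> \<beta>)"
    by (simp add: sum_distrib_left sum_distrib_right mult.assoc) (rule sum.swap)
  also have "\<dots> = (\<Sum>\<delta>\<in>configs t. path_sum t F (Suc m) \<alpha> \<delta> * path_sum t (\<lambda>j. F (Suc m + j)) n \<delta> \<beta>)"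
    using Suc.prems by (simp add: path_sum_Suc)
  finally show ?case .
qed

lemma card_paths:
  assumes "\<alpha> \<in> configs t" "\<beta> \<in> configs t"
  shows "card (paths t (Suc m) \<alpha> \<beta>) = (2 ^ t) ^ m"
proof -
  have "path_sum t (\<lambda>_ _ _. 1) (Suc m) \<alpha> \<beta> = (2 ^ t) ^ m" if "\<alpha> \<in> configs t" for \<alpha>
    using that
  proof (induction m arbitrary: \<alpha>)
    case 0
    then show ?case using assms(2) by (simp add: path_sum_Suc path_sum_0 sum.delta')
  next
    case (Suc m)
    then show ?case by (simp add: path_sum_Suc[of _ _ _ "Suc m"] card_configs)
  qed
  then have "of_nat (card (paths t (Suc m) \<alpha> \<beta>)) = (of_nat ((2 ^ t) ^ m) :: complex)"
    using assms(1) unfolding path_sum_def by simp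
  then show ?thesis by (simp only: of_nat_eq_iff)
qed

lemma sum_closed_paths:
  assumes "1 \<le> L"
  shows "(\<Sum>\<gamma>\<in>configs t. \<Sum>K\<in>paths t L \<gamma> \<gamma>. G K) = (\<Sum>W\<in>PiE {..<L} (\<lambda>_. configs t). G (\<lambda>i\<in>{..L}. W (i mod L)))"
proof -
  define close :: "(nat \<Rightarrow> bool list) \<Rightarrow> bool list \<times> (nat \<Rightarrow> bool list)"
    where "close W = (W 0, \<lambda>i\<in>{..L}. W (i mod L))" for W
  have "(\<Sum>\<gamma>\<in>configs t. \<Sum>K\<in>paths t L \<gamma> \<gamma>. G K) = (\<Sum>(\<gamma>, K)\<in>Sigma (configs t) (\<lambda>\<gamma>. paths t L \<gamma> \<gamma>). G K)"
    by (simp add: sum.Sigma)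
  also have "\<dots> = (\<Sum>W\<in>PiE {..<L} (\<lambda>_. configs t). G (\<lambda>i\<in>{..L}. W (i mod L)))"
  proof (rule sum.reindex_bij_witness[where j = "\<lambda>(\<gamma>, K). \<lambda>i\<in>{..<L}. K i" and i = close])
    fix p assume "p \<in> Sigma (configs t) (\<lambda>\<gamma>. paths t L \<gamma> \<gamma>)"
    then obtain \<gamma> K where p: "p = (\<gamma>, K)" "K \<in> PiE {..L} (\<lambda>_. configs t)" "K 0 = \<gamma>" "K L = \<gamma>"
      unfolding paths_def by auto
    have "(\<lambda>i\<in>{..L}. (\<lambda>i\<in>{..<L}. K i) (i mod L)) = K"
    proof
      fix i show "(\<lambda>i\<in>{..L}. (\<lambda>i\<in>{..<L}. K i) (i mod L)) i = K i"
        using p assms by (cases "i \<le> L") (auto simp: PiE_iff extensional_def le_less)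
    qed
    then show "close ((\<lambda>(\<gamma>, K). \<lambda>i\<in>{..<L}. K i) p) = p"
      and "G (\<lambda>i\<in>{..L}. ((\<lambda>(\<gamma>, K). \<lambda>i\<in>{..<L}. K i) p) (i mod L)) = (case p of (\<gamma>, K) \<Rightarrow> G K)"
      using p assms by (simp_all add: close_def)
    show "(\<lambda>(\<gamma>, K). \<lambda>i\<in>{..<L}. K i) p \<in> PiE {..<L} (\<lambda>_. configs t)"
      using p by (auto simp: PiE_iff)
  next
    fix W assume "W \<in> PiE {..<L} (\<lambda>_. configs t)"
    then show "(\<lambda>(\<gamma>, K). \<lambda>i\<in>{..<L}. K i) (close W) = W"
      and "close W \<in> Sigma (configs t) (\<lambda>\<gamma>. paths t L \<gamma> \<gamma>)"
      using assms by (auto simp: close_def paths_def PiE_iff extensional_def fun_eq_iff)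
  qed
  finally show ?thesis .
qed

lemma network_amp_eq_trace:
  assumes "1 \<le> L"
  shows "network_amp J b h v L t s =
    (\<Sum>\<gamma>\<in>configs t. path_sum t (\<lambda>j c d. worldline_amp b (h j) (v j) (s ! j # c) * bond_amp J c d) L \<gamma> \<gamma>)"
proof -
  have "(\<lambda>i\<in>{..L}. W (i mod L)) (Suc j) = W ((j + 1) mod L)" if "j < L" for W j
    using that by simp
  then show ?thesis
    unfolding path_sum_def sum_closed_paths[OF assms] network_amp_def
    by (intro sum.cong prod.cong refl) auto
qed

type_synonym segment = "bool list \<Rightarrow> bool list \<Rightarrow> bool list \<Rightarrow> complex"

text \<open>The amplitude of a segment of sites with current spins \<open>x\<close>, as a matrix in the
  histories \<open>\<alpha>\<close>, \<open>\<beta>\<close> of the sites just before and just after the segment.\<close>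

definition segment_amp :: "real \<Rightarrow> real \<Rightarrow> (nat \<Rightarrow> real) \<Rightarrow> (nat \<Rightarrow> bool \<Rightarrow> complex) \<Rightarrow> nat \<Rightarrow> segment" where
  "segment_amp J b h v t x =
     path_sum t (\<lambda>j c d. worldline_amp b (h j) (v j) (x ! j # c) * bond_amp J c d) (length x)"

lemma network_amp_append3:
  assumes "1 \<le> LA + LB + LC" "length xa = LA" "length xb = LB" "length xc = LC"
  shows "network_amp J b h v (LA + LB + LC) t (xa @ xb @ xc) =
    (\<Sum>\<gamma>\<in>configs t. \<Sum>\<beta>\<in>configs t. (\<Sum>\<delta>\<in>configs t.
       segment_amp J b h v t xa \<gamma> \<delta> * segment_amp J b (\<lambda>j. h (LA + j)) (\<lambda>j. v (LA + j)) t xb \<delta> \<beta>) *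
       segment_amp J b (\<lambda>j. h (LA + LB + j)) (\<lambda>j. v (LA + LB + j)) t xc \<beta> \<gamma>)"
proof -
  define F where "F j c d = worldline_amp b (h j) (v j) ((xa @ xb @ xc) ! j # c) * bond_amp J c d" for j c d
  have A: "path_sum t F LA \<gamma> \<delta> = segment_amp J b h v t xa \<gamma> \<delta>" for \<gamma> \<delta>
    unfolding segment_amp_def F_def assms(2)[symmetric] by (intro path_sum_cong) (simp add: nth_append)
  have B: "path_sum t (\<lambda>j. F (LA + j)) LB \<delta> \<beta> = segment_amp J b (\<lambda>j. h (LA + j)) (\<lambda>j. v (LA + j)) t xb \<delta> \<beta>"
    for \<delta> \<beta>
    unfolding segment_amp_def F_def assms(2,3)[symmetric] by (intro path_sum_cong) (simp add: nth_append)
  have C: "path_sum t (\<lambda>j. F (LA + (LB + j))) LC \<beta> \<gamma>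
      = segment_amp J b (\<lambda>j. h (LA + LB + j)) (\<lambda>j. v (LA + LB + j)) t xc \<beta> \<gamma>" for \<beta> \<gamma>
    unfolding segment_amp_def F_def assms(2-4)[symmetric] by (intro path_sum_cong) (simp add: nth_append add.assoc)
  have "network_amp J b h v (LA + LB + LC) t (xa @ xb @ xc) = (\<Sum>\<gamma>\<in>configs t. path_sum t F (LA + (LB + LC)) \<gamma> \<gamma>)"
    using network_amp_eq_trace[OF assms(1)] unfolding F_def by (simp add: add.assoc)
  also have "\<dots> = (\<Sum>\<gamma>\<in>configs t. \<Sum>\<delta>\<in>configs t. path_sum t F LA \<gamma> \<delta> * (\<Sum>\<beta>\<in>configs t.
      path_sum t (\<lambda>j. F (LA + j)) LB \<delta> \<beta> * path_sum t (\<lambda>j. F (LA + (LB + j))) LC \<beta> \<gamma>))"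
    by (intro sum.cong refl) (simp add: path_sum_add)
  also have "\<dots> = (\<Sum>\<gamma>\<in>configs t. \<Sum>\<beta>\<in>configs t. (\<Sum>\<delta>\<in>configs t.
      path_sum t F LA \<gamma> \<delta> * path_sum t (\<lambda>j. F (LA + j)) LB \<delta> \<beta>) * path_sum t (\<lambda>j. F (LA + (LB + j))) LC \<beta> \<gamma>)"
    by (rule sum.cong[OF refl]) (simp add: sum_distrib_left sum_distrib_right mult.assoc, rule sum.swap)
  finally show ?thesis unfolding A B C .
qed

lemma floquet_power_prod_state_append3:
  assumes "1 \<le> LA + LB + LC" "xa \<in> configs LA" "xb \<in> configs LB" "xc \<in> configs LC"
  shows "(floquet (LA + LB + LC) J b h ^^ t) (prod_state (LA + LB + LC) \<theta> \<phi>) (xa @ xb @ xc) =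
    (\<Sum>\<gamma>\<in>configs t. \<Sum>\<beta>\<in>configs t. (\<Sum>\<delta>\<in>configs t.
       segment_amp J b h (site_amp \<theta> \<phi>) t xa \<gamma> \<delta> *
       segment_amp J b (\<lambda>j. h (LA + j)) (\<lambda>j. site_amp \<theta> \<phi> (LA + j)) t xb \<delta> \<beta>) *
       segment_amp J b (\<lambda>j. h (LA + LB + j)) (\<lambda>j. site_amp \<theta> \<phi> (LA + LB + j)) t xc \<beta> \<gamma>)"
proof -
  have "xa @ xb @ xc \<in> configs (LA + LB + LC)"
    using assms(2-4) by (simp add: configs_def)
  then have "(floquet (LA + LB + LC) J b h ^^ t) (prod_state (LA + LB + LC) \<theta> \<phi>) (xa @ xb @ xc)
      = network_amp J b h (site_amp \<theta> \<phi>) (LA + LB + LC) t (xa @ xb @ xc)"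
    by (rule floquet_power_prod_state[OF assms(1)])
  also have "\<dots> = (\<Sum>\<gamma>\<in>configs t. \<Sum>\<beta>\<in>configs t. (\<Sum>\<delta>\<in>configs t.
       segment_amp J b h (site_amp \<theta> \<phi>) t xa \<gamma> \<delta> *
       segment_amp J b (\<lambda>j. h (LA + j)) (\<lambda>j. site_amp \<theta> \<phi> (LA + j)) t xb \<delta> \<beta>) *
       segment_amp J b (\<lambda>j. h (LA + LB + j)) (\<lambda>j. site_amp \<theta> \<phi> (LA + LB + j)) t xc \<beta> \<gamma>)"
    using assms by (intro network_amp_append3) (simp_all add: configs_def)
  finally show ?thesis .
qed

section \<open>The partial transpose of a tripartite network\<close>

definition segment_isometry :: "nat \<Rightarrow> nat \<Rightarrow> segment \<Rightarrow> bool" where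
  "segment_isometry t l A \<longleftrightarrow> (\<forall>\<alpha>\<in>configs t. \<forall>\<beta>\<in>configs t. \<forall>\<alpha>'\<in>configs t. \<forall>\<beta>'\<in>configs t.
     (\<Sum>x\<in>configs l. A x \<alpha> \<beta> * cnj (A x \<alpha>' \<beta>')) = (if \<alpha> = \<alpha>' \<and> \<beta> = \<beta>' then 1 / 2 ^ t else 0))"

lemma sum_mult_cnj_sum:
  "(\<Sum>c\<in>S. (\<Sum>p\<in>P. f p c) * cnj (\<Sum>q\<in>Q. g q c)) = (\<Sum>p\<in>P. \<Sum>q\<in>Q. \<Sum>c\<in>S. f p c * cnj (g q c))"
proof -
  have "(\<Sum>c\<in>S. (\<Sum>p\<in>P. f p c) * cnj (\<Sum>q\<in>Q. g q c)) = (\<Sum>c\<in>S. \<Sum>p\<in>P. \<Sum>q\<in>Q. f p c * cnj (g q c))"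
    by (simp add: cnj_sum sum_product)
  also have "\<dots> = (\<Sum>p\<in>P. \<Sum>q\<in>Q. \<Sum>c\<in>S. f p c * cnj (g q c))"
    by (subst sum.swap) (intro sum.cong refl, rule sum.swap)
  finally show ?thesis .
qed

lemma segment_isometry_contract:
  assumes "segment_isometry t l C"
  shows "(\<Sum>c\<in>configs l. (\<Sum>\<gamma>\<in>configs t. \<Sum>\<beta>\<in>configs t. X \<gamma> \<beta> * C c \<beta> \<gamma>) *
            cnj (\<Sum>\<gamma>\<in>configs t. \<Sum>\<beta>\<in>configs t. Y \<gamma> \<beta> * C c \<beta> \<gamma>))
       = (\<Sum>\<gamma>\<in>configs t. \<Sum>\<beta>\<in>configs t. X \<gamma> \<beta> * cnj (Y \<gamma> \<beta>)) / 2 ^ t"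
proof -
  define T where "T = configs t \<times> configs t"
  have pairs: "(\<Sum>\<gamma>\<in>configs t. \<Sum>\<beta>\<in>configs t. f \<gamma> \<beta>) = (\<Sum>p\<in>T. f (fst p) (snd p))"
    for f :: "_ \<Rightarrow> _ \<Rightarrow> complex"
    unfolding T_def by (simp add: sum.cartesian_product case_prod_beta)
  have "(\<Sum>c\<in>configs l. (\<Sum>p\<in>T. X (fst p) (snd p) * C c (snd p) (fst p)) *
          cnj (\<Sum>q\<in>T. Y (fst q) (snd q) * C c (snd q) (fst q)))
      = (\<Sum>p\<in>T. \<Sum>q\<in>T. X (fst p) (snd p) * cnj (Y (fst q) (snd q)) *
           (\<Sum>c\<in>configs l. C c (snd p) (fst p) * cnj (C c (snd q) (fst q))))"
    unfolding sum_mult_cnj_sum by (simp add: sum_distrib_left mult_ac)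
  also have "\<dots> = (\<Sum>p\<in>T. \<Sum>q\<in>T. if q = p then X (fst p) (snd p) * cnj (Y (fst p) (snd p)) / 2 ^ t else 0)"
    using assms unfolding segment_isometry_def T_def by (auto simp: prod_eq_iff intro!: sum.cong)
  also have "\<dots> = (\<Sum>p\<in>T. X (fst p) (snd p) * cnj (Y (fst p) (snd p))) / 2 ^ t"
    unfolding T_def by (simp add: sum.delta sum_divide_distrib)
  finally show ?thesis unfolding pairs .
qed

text \<open>In \<open>\<psi>(x\<^sub>A x\<^sub>B x\<^sub>C) = \<Sum> A x\<^sub>A \<gamma> \<delta> B x\<^sub>B \<delta> \<beta> C x\<^sub>C \<beta> \<gamma>\<close> the bond variables \<open>\<gamma>, \<delta>, \<beta>\<close> live on
  the cuts C|A, A|B and B|C. After tracing out C, the partial transpose of \<open>\<rho>\<^sub>A\<^sub>B\<close> is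
  \<open>2\<^sup>-\<^sup>t \<Sum> |pt_ket \<iota>\<rangle>\<langle>pt_bra \<iota>|\<close> over \<open>\<iota> = (\<gamma>, \<beta>, \<delta>, \<delta>')\<close>, with \<open>\<delta>, \<delta>'\<close> the A|B bonds of ket and bra.\<close>

definition pt_ket :: "nat \<Rightarrow> segment \<Rightarrow> segment \<Rightarrow> bool list \<times> bool list \<times> bool list \<times> bool list \<Rightarrow> bool list \<Rightarrow> complex"
  where "pt_ket LA A B = (\<lambda>(\<gamma>, \<beta>, \<delta>, \<delta>') x. A (take LA x) \<gamma> \<delta> * cnj (B (drop LA x) \<delta>' \<beta>))"

definition pt_bra :: "nat \<Rightarrow> segment \<Rightarrow> segment \<Rightarrow> bool list \<times> bool list \<times> bool list \<times> bool list \<Rightarrow> bool list \<Rightarrow> complex"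
  where "pt_bra LA A B = (\<lambda>(\<gamma>, \<beta>, \<delta>, \<delta>') y. B (drop LA y) \<delta> \<beta> * cnj (A (take LA y) \<gamma> \<delta>'))"

lemma ptranspose_ptrace_tripartite:
  assumes psi: "\<And>xa xb xc. xa \<in> configs LA \<Longrightarrow> xb \<in> configs LB \<Longrightarrow> xc \<in> configs LC \<Longrightarrow>
      \<psi> (xa @ xb @ xc) = (\<Sum>\<gamma>\<in>configs t. \<Sum>\<beta>\<in>configs t. (\<Sum>\<delta>\<in>configs t. A xa \<gamma> \<delta> * B xb \<delta> \<beta>) * C xc \<beta> \<gamma>)"
    and C: "segment_isometry t LC C"
    and x: "x \<in> configs (LA + LB)" and y: "y \<in> configs (LA + LB)"
  shows "ptranspose_after LA (ptrace_last LC (proj \<psi>)) x y =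
    1 / 2 ^ t * (\<Sum>\<iota>\<in>configs t \<times> configs t \<times> configs t \<times> configs t. pt_ket LA A B \<iota> x * pt_bra LA A B \<iota> y)"
proof -
  have parts: "take LA x \<in> configs LA" "drop LA y \<in> configs LB" "take LA y \<in> configs LA" "drop LA x \<in> configs LB"
    using x y by (auto simp: configs_def)
  have "ptranspose_after LA (ptrace_last LC (proj \<psi>)) x y
      = (\<Sum>c\<in>configs LC. \<psi> (take LA x @ drop LA y @ c) * cnj (\<psi> (take LA y @ drop LA x @ c)))"
    unfolding ptranspose_after_def ptrace_last_def proj_def by simp
  also have "\<dots> = (\<Sum>c\<in>configs LC.
      (\<Sum>\<gamma>\<in>configs t. \<Sum>\<beta>\<in>configs t. (\<Sum>\<delta>\<in>configs t. A (take LA x) \<gamma> \<delta> * B (drop LA y) \<delta> \<beta>) * C c \<beta> \<gamma>) *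
      cnj (\<Sum>\<gamma>\<in>configs t. \<Sum>\<beta>\<in>configs t. (\<Sum>\<delta>'\<in>configs t. A (take LA y) \<gamma> \<delta>' * B (drop LA x) \<delta>' \<beta>) * C c \<beta> \<gamma>))"
    using parts by (intro sum.cong refl) (simp only: psi)
  also have "\<dots> = (\<Sum>\<gamma>\<in>configs t. \<Sum>\<beta>\<in>configs t.
      (\<Sum>\<delta>\<in>configs t. A (take LA x) \<gamma> \<delta> * B (drop LA y) \<delta> \<beta>) *
      cnj (\<Sum>\<delta>'\<in>configs t. A (take LA y) \<gamma> \<delta>' * B (drop LA x) \<delta>' \<beta>)) / 2 ^ t"
    by (rule segment_isometry_contract[OF C])
  also have "\<dots> = 1 / 2 ^ t * (\<Sum>\<gamma>\<in>configs t. \<Sum>\<beta>\<in>configs t. \<Sum>\<delta>\<in>configs t. \<Sum>\<delta>'\<in>configs t.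
      pt_ket LA A B (\<gamma>, \<beta>, \<delta>, \<delta>') x * pt_bra LA A B (\<gamma>, \<beta>, \<delta>, \<delta>') y)"
    by (simp add: pt_ket_def pt_bra_def cnj_sum sum_product mult_ac)
  also have "\<dots> = 1 / 2 ^ t * (\<Sum>\<iota>\<in>configs t \<times> configs t \<times> configs t \<times> configs t. pt_ket LA A B \<iota> x * pt_bra LA A B \<iota> y)"
    by (simp add: sum.cartesian_product case_prod_beta)
  finally show ?thesis .
qed

lemma pt_bra_pt_ket_biorthogonal:
  assumes A: "segment_isometry t LA A" and B: "segment_isometry t LB B"
    and \<iota>: "\<iota> \<in> configs t \<times> configs t \<times> configs t \<times> configs t"
    and \<kappa>: "\<kappa> \<in> configs t \<times> configs t \<times> configs t \<times> configs t"
  shows "(\<Sum>y\<in>configs (LA + LB). pt_bra LA A B \<iota> y * pt_ket LA A B \<kappa> y) =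
    (if \<kappa> = map_prod id (map_prod id prod.swap) \<iota> then 1 / 2 ^ t * (1 / 2 ^ t) else 0)"
proof -
  obtain \<gamma> \<beta> \<delta> \<delta>' where \<iota>_eq: "\<iota> = (\<gamma>, \<beta>, \<delta>, \<delta>')" by (cases \<iota>) auto
  obtain \<gamma>2 \<beta>2 \<delta>2 \<delta>2' where \<kappa>_eq: "\<kappa> = (\<gamma>2, \<beta>2, \<delta>2, \<delta>2')" by (cases \<kappa>) auto
  have "(\<Sum>y\<in>configs (LA + LB). pt_bra LA A B \<iota> y * pt_ket LA A B \<kappa> y)
      = (\<Sum>u\<in>configs LA. \<Sum>v\<in>configs LB. (A u \<gamma>2 \<delta>2 * cnj (A u \<gamma> \<delta>')) * (B v \<delta> \<beta> * cnj (B v \<delta>2' \<beta>2)))"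
    unfolding sum_configs_add
    by (intro sum.cong refl) (simp add: \<iota>_eq \<kappa>_eq pt_bra_def pt_ket_def configs_def mult_ac)
  also have "\<dots> = (\<Sum>u\<in>configs LA. A u \<gamma>2 \<delta>2 * cnj (A u \<gamma> \<delta>')) * (\<Sum>v\<in>configs LB. B v \<delta> \<beta> * cnj (B v \<delta>2' \<beta>2))"
    by (simp add: sum_product)
  also have "\<dots> = (if \<kappa> = map_prod id (map_prod id prod.swap) \<iota> then 1 / 2 ^ t * (1 / 2 ^ t) else 0)"
    using A B \<iota> \<kappa> unfolding segment_isometry_def \<iota>_eq \<kappa>_eq by auto
  finally show ?thesis .
qed

section \<open>A light-cone argument for pairs of histories\<close>

definition flip_sign :: "bool \<Rightarrow> complex" where
  "flip_sign a = (if a then -1 else 1)"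

lemma flip_sign_simps [simp]: "flip_sign True = -1" "flip_sign False = 1"
  by (simp_all add: flip_sign_def)

lemma flip_sign_xor3:
  "a \<noteq> (b \<noteq> (c \<noteq> d)) \<Longrightarrow> flip_sign a * (flip_sign b * flip_sign c * flip_sign d) = -1"
  by (cases a; cases b; cases c; cases d) simp_all

definition flip_at :: "bool list \<Rightarrow> nat \<Rightarrow> bool list" where
  "flip_at e p = e[p := \<not> e ! p]"

lemma length_flip_at [simp]: "length (flip_at e p) = length e"
  by (simp add: flip_at_def)

lemma nth_flip_at: "q < length e \<Longrightarrow> flip_at e p ! q = (if q = p then \<not> e ! p else e ! q)"
  by (simp add: flip_at_def nth_list_update)

lemma flip_at_flip_at [simp]: "flip_at (flip_at e p) p = e"
  by (cases "p < length e") (simp_all add: flip_at_def list_update_beyond)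

lemma flip_at_Cons_Suc [simp]: "flip_at (a # e) (Suc p) = a # flip_at e p"
  by (simp add: flip_at_def)

lemma flip_at_neq: "p < length e \<Longrightarrow> flip_at e p \<noteq> e"
  by (metis nth_flip_at)

lemma parity_propagation_triangle:
  fixes D :: "nat \<Rightarrow> nat \<Rightarrow> bool"
  assumes top: "\<And>j. j < l \<Longrightarrow> \<not> D 0 j"
    and even: "\<And>q j. q < t \<Longrightarrow> 0 < j \<Longrightarrow> j < l \<Longrightarrow> \<not> D q j \<Longrightarrow>
        D q (j - 1) = (D q (Suc j) \<noteq> ((0 < q \<and> D (q - 1) j) \<noteq> (Suc q < t \<and> D (Suc q) j)))"
    and "q < t" "q \<le> j" "j + q < l"
  shows "\<not> D q j"
  using assms(3-5)
proof (induction q arbitrary: j rule: less_induct)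
  case (less q)
  show ?case
  proof (cases q)
    case 0
    then show ?thesis using less.prems top by simp
  next
    case (Suc q0)
    have "\<not> D q0 j" "\<not> D q0 (j - 1)" "\<not> D q0 (Suc j)" "0 < q0 \<longrightarrow> \<not> D (q0 - 1) j"
      using less Suc by auto
    then show ?thesis
      using even[of q0 j] less.prems Suc by auto
  qed
qed

text \<open>The zeros spread from the top row down a triangle which, as \<open>2 t \<le> l\<close>, contains the two
  full columns \<open>t - 1\<close> and \<open>t\<close>; the parity rule then propagates zero columns sideways.\<close>

lemma parity_propagation:
  fixes D :: "nat \<Rightarrow> nat \<Rightarrow> bool"
  assumes t: "1 \<le> t" and l: "2 * t \<le> l"
    and top: "\<And>j. j < l \<Longrightarrow> \<not> D 0 j"
    and even: "\<And>q j. q < t \<Longrightarrow> 0 < j \<Longrightarrow> j < l \<Longrightarrow> \<not> D q j \<Longrightarrow>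
        D q (j - 1) = (D q (Suc j) \<noteq> ((0 < q \<and> D (q - 1) j) \<noteq> (Suc q < t \<and> D (Suc q) j)))"
    and q: "q < t" and j: "j \<le> l"
  shows "\<not> D q j"
proof -
  define zero_col where "zero_col c \<longleftrightarrow> (\<forall>q<t. \<not> D q c)" for c
  have right: "zero_col (Suc c)" if "0 < c" "c < l" "zero_col (c - 1)" "zero_col c" for c
    using that even[of _ c] unfolding zero_col_def by auto
  have left: "zero_col (c - 1)" if "0 < c" "c < l" "zero_col c" "zero_col (Suc c)" for c
    using that even[of _ c] unfolding zero_col_def by auto
  have middle: "zero_col (t - 1)" "zero_col t"
    unfolding zero_col_def using parity_propagation_triangle[OF top even] t l by auto
  have rightwards: "zero_col (t - 1 + k) \<and> zero_col (t + k)" if "t + k \<le> l" for k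
    using that
  proof (induction k)
    case (Suc k)
    then show ?case
      using right[of "t + k"] t by (auto simp: Suc_diff_le)
  qed (use middle in simp)
  have leftwards: "zero_col (t - 1 - k) \<and> zero_col (t - k)" if "k < t" for k
    using that
  proof (induction k)
    case (Suc k)
    then show ?case
      using left[of "t - 1 - k"] l by (auto simp: Suc_diff_Suc)
  qed (use middle in simp)
  show ?thesis
  proof (cases "t \<le> j")
    case True
    then show ?thesis using rightwards[of "j - t"] j q unfolding zero_col_def by simp
  next
    case False
    then show ?thesis using leftwards[of "t - 1 - j"] q unfolding zero_col_def by simp
  qed
qed

text \<open>\<open>Top j\<close> is the current spin of site \<open>j\<close>, \<open>Bulk q j\<close> the entry \<open>q\<close> of the earlier history
  of site \<open>j\<close>; flipping a bulk vertex flips it in the ket and in the bra path alike.\<close>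

datatype vertex = Top nat | Bulk nat nat

definition differs :: "(nat \<Rightarrow> bool list) \<Rightarrow> (nat \<Rightarrow> bool list) \<Rightarrow> nat \<Rightarrow> nat \<Rightarrow> bool" where
  "differs K B j q \<longleftrightarrow> K j ! q \<noteq> B j ! q"

fun odd_vertex :: "nat \<Rightarrow> nat \<Rightarrow> (nat \<Rightarrow> bool list) \<Rightarrow> (nat \<Rightarrow> bool list) \<Rightarrow> vertex \<Rightarrow> bool" where
  "odd_vertex t l K B (Top j) \<longleftrightarrow> j < l \<and> differs K B j 0"
| "odd_vertex t l K B (Bulk q j) \<longleftrightarrow> q < t \<and> 0 < j \<and> j < l \<and> \<not> differs K B j q \<and>
     (differs K B (j - 1) q \<noteq> (differs K B (Suc j) q \<noteq>
       ((0 < q \<and> differs K B j (q - 1)) \<noteq> (Suc q < t \<and> differs K B j (Suc q)))))"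

fun flip_vertex :: "vertex \<Rightarrow> bool list \<times> (nat \<Rightarrow> bool list) \<times> (nat \<Rightarrow> bool list)
    \<Rightarrow> bool list \<times> (nat \<Rightarrow> bool list) \<times> (nat \<Rightarrow> bool list)" where
  "flip_vertex (Top j) (x, K, B) = (flip_at x j, K, B)"
| "flip_vertex (Bulk q j) (x, K, B) = (x, K(j := flip_at (K j) q), B(j := flip_at (B j) q))"

lemma eq_if_no_odd_vertex:
  assumes t: "1 \<le> t" and l: "2 * t \<le> l" and K: "K \<in> paths t l \<alpha> \<beta>" and B: "B \<in> paths t l \<alpha>' \<beta>'"
    and no_odd: "\<And>w. \<not> odd_vertex t l K B w"
  shows "K = B"
proof
  fix j
  show "K j = B j"
  proof (cases "j \<le> l")
    case True
    have "\<not> differs K B j q" if "q < t" for q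
    proof (rule parity_propagation[where D = "\<lambda>q j. differs K B j q", OF t l _ _ that True])
      show "\<not> differs K B j 0" if "j < l" for j
        using no_odd[of "Top j"] that by simp
      show "differs K B (j - 1) q = (differs K B (Suc j) q \<noteq>
          ((0 < q \<and> differs K B j (q - 1)) \<noteq> (Suc q < t \<and> differs K B j (Suc q))))"
        if "q < t" "0 < j" "j < l" "\<not> differs K B j q" for q j
        using no_odd[of "Bulk q j"] that by simp
    qed
    then show ?thesis
      using length_path[OF K True] length_path[OF B True] by (intro nth_equalityI) (auto simp: differs_def)
  next
    case False
    have "K \<in> PiE {..l} (\<lambda>_. configs t)" "B \<in> PiE {..l} (\<lambda>_. configs t)" "j \<notin> {..l}"
      using K B False unfolding paths_def by auto
    then show ?thesis
      using PiE_arb by metis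
  qed
qed

lemma ex_odd_vertex_iff:
  assumes "1 \<le> t" "2 * t \<le> l" "K \<in> paths t l \<alpha> \<beta>" "B \<in> paths t l \<alpha>' \<beta>'"
  shows "(\<exists>w. odd_vertex t l K B w) \<longleftrightarrow> K \<noteq> B"
proof
  assume "\<exists>w. odd_vertex t l K B w"
  then show "K \<noteq> B" by (auto simp: differs_def elim: odd_vertex.elims)
next
  assume "K \<noteq> B"
  then show "\<exists>w. odd_vertex t l K B w" using eq_if_no_odd_vertex[OF assms] by blast
qed

lemma odd_vertex_cong:
  assumes "0 < t" and "\<And>j q. q < t \<Longrightarrow> differs K' B' j q = differs K B j q"
  shows "odd_vertex t l K' B' w = odd_vertex t l K B w"
  using assms by (cases w) (auto cong: conj_cong)

lemma flip_vertex_differs: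
  assumes "(x, K, B) \<in> configs l \<times> paths t l \<alpha> \<beta> \<times> paths t l \<alpha>' \<beta>'" "odd_vertex t l K B w" "flip_vertex w (x, K, B) = (x', K', B')" "q < t"
  shows "differs K' B' j q = differs K B j q"
proof (cases w)
  case (Top j0)
  then show ?thesis using assms(3) by simp
next
  case (Bulk q0 j0)
  then have KB: "K' = K(j0 := flip_at (K j0) q0)" "B' = B(j0 := flip_at (B j0) q0)" "K j0 ! q0 = B j0 ! q0"
    using assms(2,3) by (simp_all add: differs_def)
  have "j0 \<le> l" using assms(2) Bulk by simp
  then have "length (K j0) = t" "length (B j0) = t"
    using assms(1) length_path by blast+
  then show ?thesis
    using KB assms(4) by (cases "j = j0") (simp_all add: nth_flip_at differs_def)
qed

lemma odd_vertex_flip_vertex: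
  assumes "0 < t" "(x, K, B) \<in> configs l \<times> paths t l \<alpha> \<beta> \<times> paths t l \<alpha>' \<beta>'" "odd_vertex t l K B w" "flip_vertex w (x, K, B) = (x', K', B')"
  shows "odd_vertex t l K' B' = odd_vertex t l K B"
proof
  fix w'
  show "odd_vertex t l K' B' w' = odd_vertex t l K B w'"
    using assms(1) by (rule odd_vertex_cong) (rule flip_vertex_differs[OF assms(2-4)])
qed

lemma flip_vertex_mem:
  assumes "(x, K, B) \<in> configs l \<times> paths t l \<alpha> \<beta> \<times> paths t l \<alpha>' \<beta>'" "odd_vertex t l K B w"
  shows "flip_vertex w (x, K, B) \<in> configs l \<times> paths t l \<alpha> \<beta> \<times> paths t l \<alpha>' \<beta>'"
proof (cases w)
  case (Top j)
  then show ?thesis using assms by (auto simp: configs_def)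
next
  case (Bulk q j)
  then have j: "j < l" "length (K j) = t" "length (B j) = t"
    using assms by (auto intro: length_path)
  have "K(j := flip_at (K j) q) \<in> PiE (insert j {..l}) (\<lambda>_. configs t)"
    "B(j := flip_at (B j) q) \<in> PiE (insert j {..l}) (\<lambda>_. configs t)"
    using assms j by (auto intro!: PiE_fun_upd simp: configs_def paths_def)
  moreover have "insert j {..l} = {..l}" using j by auto
  ultimately show ?thesis
    using assms Bulk j by (auto simp: paths_def)
qed

lemma flip_vertex_neq:
  assumes "(x, K, B) \<in> configs l \<times> paths t l \<alpha> \<beta> \<times> paths t l \<alpha>' \<beta>'" "odd_vertex t l K B w"
  shows "flip_vertex w (x, K, B) \<noteq> (x, K, B)"
proof (cases w)
  case (Top j)
  then show ?thesis using assms by (auto simp: configs_def dest: flip_at_neq)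
next
  case (Bulk q j)
  then have "length (K j) = t" "q < t"
    using assms by (auto intro: length_path)
  then have "flip_at (K j) q \<noteq> K j" by (simp add: flip_at_neq)
  then show ?thesis using Bulk by (auto simp: fun_eq_iff)
qed

lemma flip_vertex_flip_vertex [simp]: "flip_vertex w (flip_vertex w p) = p"
  by (cases p; cases w) auto

section \<open>Segments of the self-dual circuit are isometries\<close>

text \<open>Dual-unitarity of a gate \<open>G a b = (if a = b then u else v)\<close>, in the form used by the
  sign-reversing involution: flipping one leg in both the ket and the bra copy costs the sign
  \<open>-1\<close> exactly when ket and bra differ on the other leg.\<close>

lemma gate_flip_sign:
  fixes G :: "bool \<Rightarrow> bool \<Rightarrow> complex"
  assumes G: "\<And>a b. G a b = (if a = b then u else v)"
    and "u * cnj u = v * cnj v" and "u * cnj v = - (v * cnj u)"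
  shows "G a (\<not> b) * cnj (G a' (\<not> b)) = flip_sign (a \<noteq> a') * (G a b * cnj (G a' b))"
    and "G (\<not> a) b * cnj (G (\<not> a) b') = flip_sign (b \<noteq> b') * (G a b * cnj (G a b'))"
  using assms(2,3) by (cases a; cases a'; cases b; cases b'; simp add: G; simp add: mult.commute)+

locale self_dual =
  fixes J b :: real
  assumes cos_2J: "cos (2 * J) = 0" and cos_2b: "cos (2 * b) = 0"
begin

lemma kick_gate_abs: "kick_gate b a a' * cnj (kick_gate b a a') = 1 / 2"
proof -
  have cos2: "cos b * cos b = 1 / 2"
    using cos_2b by (simp add: cos_double_cos power2_eq_square)
  then have sin2: "sin b * sin b = 1 / 2"
    using sin_cos_squared_add[of b] by (simp add: power2_eq_square)
  have "complex_of_real (cos b * cos b) = 1 / 2" "complex_of_real (sin b * sin b) = 1 / 2"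
    unfolding cos2 sin2 by simp_all
  moreover have "(- \<i> * complex_of_real s) * cnj (- \<i> * complex_of_real s) = complex_of_real (s\<^sup>2)" for s
    by (simp add: complex_eq_iff power2_eq_square)
  ultimately show ?thesis
    unfolding kick_gate_def by (simp add: power2_eq_square flip: of_real_mult)
qed

lemma kick_gate_flip:
  shows "kick_gate b a (\<not> c) * cnj (kick_gate b a' (\<not> c))
           = flip_sign (a \<noteq> a') * (kick_gate b a c * cnj (kick_gate b a' c))"
    and "kick_gate b (\<not> a) c * cnj (kick_gate b (\<not> a) c')
           = flip_sign (c \<noteq> c') * (kick_gate b a c * cnj (kick_gate b a c'))"
proof -
  have G: "kick_gate b a c = (if a = c then complex_of_real (cos b) else - \<i> * complex_of_real (sin b))" for a c
    by (rule kick_gate_def)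
  have "cos b ^ 2 = sin b ^ 2"
    using cos_2b by (simp add: cos_double)
  then have uu: "complex_of_real (cos b) * cnj (complex_of_real (cos b))
      = (- \<i> * complex_of_real (sin b)) * cnj (- \<i> * complex_of_real (sin b))"
    by (simp add: complex_eq_iff power2_eq_square)
  have uv: "complex_of_real (cos b) * cnj (- \<i> * complex_of_real (sin b))
      = - ((- \<i> * complex_of_real (sin b)) * cnj (complex_of_real (cos b)))"
    by simp
  show "kick_gate b a (\<not> c) * cnj (kick_gate b a' (\<not> c))
          = flip_sign (a \<noteq> a') * (kick_gate b a c * cnj (kick_gate b a' c))"
    and "kick_gate b (\<not> a) c * cnj (kick_gate b (\<not> a) c')
          = flip_sign (c \<noteq> c') * (kick_gate b a c * cnj (kick_gate b a c'))"
    by (rule gate_flip_sign[OF G uu uv])+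
qed

lemma ising_gate_flip:
  shows "ising_gate J a (\<not> c) * cnj (ising_gate J a' (\<not> c))
           = flip_sign (a \<noteq> a') * (ising_gate J a c * cnj (ising_gate J a' c))"
    and "ising_gate J (\<not> a) c * cnj (ising_gate J (\<not> a) c')
           = flip_sign (c \<noteq> c') * (ising_gate J a c * cnj (ising_gate J a c'))"
proof -
  define u where "u = exp (- \<i> * complex_of_real J)"
  define v where "v = exp (\<i> * complex_of_real J)"
  have G: "ising_gate J a c = (if a = c then u else v)" for a c
    by (simp add: ising_gate_def spin_sign_def u_def v_def)
  have uu: "u * cnj u = v * cnj v"
    by (simp add: u_def v_def exp_cnj exp_add[symmetric])
  have "u * cnj v = cis (- (2 * J))" "v * cnj u = cis (2 * J)"
    by (simp_all add: u_def v_def exp_cnj exp_add[symmetric] cis_conv_exp algebra_simps)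
  then have uv: "u * cnj v = - (v * cnj u)"
    using cos_2J by (simp add: complex_eq_iff)
  show "ising_gate J a (\<not> c) * cnj (ising_gate J a' (\<not> c))
          = flip_sign (a \<noteq> a') * (ising_gate J a c * cnj (ising_gate J a' c))"
    and "ising_gate J (\<not> a) c * cnj (ising_gate J (\<not> a) c')
          = flip_sign (c \<noteq> c') * (ising_gate J a c * cnj (ising_gate J a c'))"
    by (rule gate_flip_sign[OF G uu uv])+
qed

definition folded_worldline :: "real \<Rightarrow> (bool \<Rightarrow> complex) \<Rightarrow> bool list \<Rightarrow> bool list \<Rightarrow> complex" where
  "folded_worldline hh v e e' = worldline_amp b hh v e * cnj (worldline_amp b hh v e')"

definition folded_step :: "real \<Rightarrow> bool list \<Rightarrow> bool list \<Rightarrow> nat \<Rightarrow> complex" where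
  "folded_step hh e e' q =
     kick_gate b (e ! q) (e ! Suc q) * cnj (kick_gate b (e' ! q) (e' ! Suc q)) *
     (field_phase hh (e ! Suc q) * cnj (field_phase hh (e' ! Suc q)))"

lemma folded_worldline_closed:
  assumes "e \<noteq> []" "length e' = length e"
  shows "folded_worldline hh v e e' = v (last e) * cnj (v (last e')) * (\<Prod>q<length e - 1. folded_step hh e e' q)"
proof -
  have "e' \<noteq> []" using assms by auto
  with assms show ?thesis
    unfolding folded_worldline_def folded_step_def
    by (simp add: worldline_amp_closed cnj_prod prod.distrib mult_ac)
qed

lemma folded_worldline_diag:
  assumes v: "\<And>a. v a * cnj (v a) = 1 / 2" and "e \<noteq> []"
  shows "folded_worldline hh v e e = (1 / 2) ^ length e"
proof -
  have "folded_step hh e e = (\<lambda>q. 1 / 2)"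
    by (simp add: folded_step_def kick_gate_abs field_phase_abs fun_eq_iff)
  then have "folded_worldline hh v e e = 1 / 2 * (1 / 2) ^ (length e - 1)"
    unfolding folded_worldline_closed[OF assms(2) refl] by (simp only: v prod_constant card_lessThan)
  also have "\<dots> = (1 / 2) ^ length e"
    using assms(2) by (cases e) simp_all
  finally show ?thesis .
qed

lemma folded_step_flip:
  assumes len: "length e' = length e" and q: "Suc q < length e" and p: "e ! p = e' ! p"
  shows "folded_step hh (flip_at e p) (flip_at e' p) q =
    (if q = p - 1 \<and> 0 < p then flip_sign (e ! (p - 1) \<noteq> e' ! (p - 1)) else 1) *
    ((if q = p then flip_sign (e ! Suc p \<noteq> e' ! Suc p) else 1) * folded_step hh e e' q)"
proof -
  consider "Suc q = p" | "q = p" | "Suc q \<noteq> p" "q \<noteq> p" by blast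
  then show ?thesis
  proof cases
    case 1
    have "folded_step hh (flip_at e p) (flip_at e' p) q
        = kick_gate b (e ! q) (\<not> e ! p) * cnj (kick_gate b (e' ! q) (\<not> e ! p))"
      unfolding folded_step_def using len q p 1 by (simp add: nth_flip_at field_phase_abs)
    also have "\<dots> = flip_sign (e ! q \<noteq> e' ! q) * folded_step hh e e' q"
      unfolding folded_step_def using 1 p kick_gate_flip(1)[of "e ! q" "e ! p" "e' ! q"]
      by (simp add: field_phase_abs)
    finally show ?thesis using 1 by auto
  next
    case 2
    have "folded_step hh (flip_at e p) (flip_at e' p) q
        = kick_gate b (\<not> e ! p) (e ! Suc p) * cnj (kick_gate b (\<not> e ! p) (e' ! Suc p)) *
          (field_phase hh (e ! Suc p) * cnj (field_phase hh (e' ! Suc p)))"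
      unfolding folded_step_def using len q p 2 by (simp add: nth_flip_at)
    also have "\<dots> = flip_sign (e ! Suc p \<noteq> e' ! Suc p) * folded_step hh e e' q"
      unfolding folded_step_def using 2 p by (simp add: kick_gate_flip(2))
    finally show ?thesis using 2 by auto
  next
    case 3
    then show ?thesis
      using len q unfolding folded_step_def by (auto simp: nth_flip_at)
  qed
qed

lemma folded_worldline_flip:
  assumes v: "\<And>a. v a * cnj (v a) = 1 / 2"
    and len: "length e' = length e" and p: "p < length e" and ep: "e ! p = e' ! p"
  shows "folded_worldline hh v (flip_at e p) (flip_at e' p) =
    flip_sign (0 < p \<and> e ! (p - 1) \<noteq> e' ! (p - 1)) * flip_sign (Suc p < length e \<and> e ! Suc p \<noteq> e' ! Suc p) *
    folded_worldline hh v e e'"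
proof -
  define n where "n = length e - 1"
  have n: "length e = Suc n" "p \<le> n"
    using p unfolding n_def by auto
  then have ne: "e \<noteq> []" "flip_at e p \<noteq> []" "e' \<noteq> []" "flip_at e' p \<noteq> []"
    using len by (metis length_0_conv length_flip_at nat.distinct(1))+
  have last_eq: "last (flip_at e p) = flip_at e p ! n" "last (flip_at e' p) = flip_at e' p ! n"
      "last e = e ! n" "last e' = e' ! n"
    using ne len n unfolding n_def by (simp_all add: last_conv_nth)
  have init: "v (last (flip_at e p)) * cnj (v (last (flip_at e' p))) = v (last e) * cnj (v (last e'))"
    unfolding last_eq using ep n len by (cases "p = n") (simp_all add: nth_flip_at v)
  have "(\<Prod>q<n. folded_step hh (flip_at e p) (flip_at e' p) q)
      = (\<Prod>q<n. (if q = p - 1 \<and> 0 < p then flip_sign (e ! (p - 1) \<noteq> e' ! (p - 1)) else 1) *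
          ((if q = p then flip_sign (e ! Suc p \<noteq> e' ! Suc p) else 1) * folded_step hh e e' q))"
    using len ep n by (intro prod.cong refl) (simp add: folded_step_flip)
  also have "\<dots> = flip_sign (0 < p \<and> e ! (p - 1) \<noteq> e' ! (p - 1)) *
      (flip_sign (Suc p < length e \<and> e ! Suc p \<noteq> e' ! Suc p) * (\<Prod>q<n. folded_step hh e e' q))"
    using n by (cases p) (simp_all add: prod.distrib prod.delta)
  finally show ?thesis
    using ne len init unfolding n_def by (simp add: folded_worldline_closed mult_ac)
qed

definition folded_bond :: "bool list \<Rightarrow> bool list \<Rightarrow> bool list \<Rightarrow> bool list \<Rightarrow> complex" where
  "folded_bond c c' d d' = bond_amp J c d * cnj (bond_amp J c' d')"

lemma folded_bond_closed:
  assumes "length c = t" "length c' = t"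
  shows "folded_bond c c' d d' = (\<Prod>q<t. ising_gate J (c ! q) (d ! q) * cnj (ising_gate J (c' ! q) (d' ! q)))"
  unfolding folded_bond_def bond_amp_def using assms by (simp add: cnj_prod prod.distrib)

lemma folded_bond_diag: "length c = t \<Longrightarrow> folded_bond c c d d = 1"
  by (simp add: folded_bond_closed ising_gate_abs)

lemma folded_bond_flip_left:
  assumes "length c = t" "length c' = t" "length d = t" "length d' = t" "p < t" "c ! p = c' ! p"
  shows "folded_bond (flip_at c p) (flip_at c' p) d d' = flip_sign (d ! p \<noteq> d' ! p) * folded_bond c c' d d'"
proof -
  have "folded_bond (flip_at c p) (flip_at c' p) d d' = (\<Prod>q<t. (if q = p then flip_sign (d ! p \<noteq> d' ! p) else 1) *
      (ising_gate J (c ! q) (d ! q) * cnj (ising_gate J (c' ! q) (d' ! q))))"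
    using assms ising_gate_flip(2)[of "c ! p" "d ! p" "d' ! p"]
    by (auto simp: folded_bond_closed nth_flip_at intro!: prod.cong)
  then show ?thesis
    using assms by (simp add: folded_bond_closed prod.distrib prod.delta)
qed

lemma folded_bond_flip_right:
  assumes "length c = t" "length c' = t" "length d = t" "length d' = t" "p < t" "d ! p = d' ! p"
  shows "folded_bond c c' (flip_at d p) (flip_at d' p) = flip_sign (c ! p \<noteq> c' ! p) * folded_bond c c' d d'"
proof -
  have "folded_bond c c' (flip_at d p) (flip_at d' p) = (\<Prod>q<t. (if q = p then flip_sign (c ! p \<noteq> c' ! p) else 1) *
      (ising_gate J (c ! q) (d ! q) * cnj (ising_gate J (c' ! q) (d' ! q))))"
    using assms ising_gate_flip(1)[of "c ! p" "d ! p" "c' ! p"]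
    by (auto simp: folded_bond_closed nth_flip_at intro!: prod.cong)
  then show ?thesis
    using assms by (simp add: folded_bond_closed prod.distrib prod.delta)
qed

definition folded_weight ::
    "(nat \<Rightarrow> real) \<Rightarrow> (nat \<Rightarrow> bool \<Rightarrow> complex) \<Rightarrow> nat \<Rightarrow> bool list \<Rightarrow> (nat \<Rightarrow> bool list) \<Rightarrow> (nat \<Rightarrow> bool list) \<Rightarrow> complex" where
  "folded_weight h v l x K B = (\<Prod>j<l. folded_worldline (h j) (v j) (x ! j # K j) (x ! j # B j) *
      folded_bond (K j) (B j) (K (Suc j)) (B (Suc j)))"

lemma segment_amp_mult_cnj:
  assumes "length x = l"
  shows "segment_amp J b h v t x \<alpha> \<beta> * cnj (segment_amp J b h v t x \<alpha>' \<beta>')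
    = (\<Sum>K\<in>paths t l \<alpha> \<beta>. \<Sum>B\<in>paths t l \<alpha>' \<beta>'. folded_weight h v l x K B)"
  unfolding segment_amp_def path_sum_def folded_weight_def folded_worldline_def folded_bond_def assms
  by (simp add: sum_product cnj_sum cnj_prod prod.distrib[symmetric] mult_ac)

lemma folded_weight_diag:
  assumes v: "\<And>j a. v j a * cnj (v j a) = 1 / 2" and K: "K \<in> paths t l \<alpha> \<beta>"
  shows "folded_weight h v l x K K = (1 / 2) ^ (Suc t * l)"
proof -
  have "folded_weight h v l x K K = (\<Prod>j<l. (1 / 2) ^ Suc t)"
    unfolding folded_weight_def
    using K by (intro prod.cong refl) (simp add: length_path folded_worldline_diag[OF v] folded_bond_diag)
  then show ?thesis by (simp only: prod_constant card_lessThan power_mult)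
qed

lemma folded_site_flip:
  assumes v: "\<And>a. v a * cnj (v a) = 1 / 2"
    and len: "length c = t" "length c' = t" "length d = t" "length d' = t" and q: "q < t" "c ! q = c' ! q"
  shows "folded_worldline hh v (a # flip_at c q) (a # flip_at c' q) * folded_bond (flip_at c q) (flip_at c' q) d d'
    = flip_sign (d ! q \<noteq> d' ! q) * flip_sign (0 < q \<and> c ! (q - 1) \<noteq> c' ! (q - 1)) *
      flip_sign (Suc q < t \<and> c ! Suc q \<noteq> c' ! Suc q) * (folded_worldline hh v (a # c) (a # c') * folded_bond c c' d d')"
proof -
  have "folded_worldline hh v (flip_at (a # c) (Suc q)) (flip_at (a # c') (Suc q))
      = flip_sign (0 < q \<and> c ! (q - 1) \<noteq> c' ! (q - 1)) * flip_sign (Suc q < t \<and> c ! Suc q \<noteq> c' ! Suc q) *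
        folded_worldline hh v (a # c) (a # c')"
    using folded_worldline_flip[of v "a # c'" "a # c" "Suc q", OF v] len q by (cases q) auto
  moreover have "folded_bond (flip_at c q) (flip_at c' q) d d' = flip_sign (d ! q \<noteq> d' ! q) * folded_bond c c' d d'"
    by (rule folded_bond_flip_left[OF len q])
  ultimately show ?thesis by (simp add: mult_ac)
qed

lemma folded_weight_flip_top:
  assumes v: "\<And>j a. v j a * cnj (v j a) = 1 / 2" and t: "0 < t"
    and p: "(x, K, B) \<in> configs l \<times> paths t l \<alpha> \<beta> \<times> paths t l \<alpha>' \<beta>'"
    and odd: "odd_vertex t l K B (Top j0)"
  shows "folded_weight h v l (flip_at x j0) K B = - folded_weight h v l x K B"
proof -
  define F where "F j = folded_worldline (h j) (v j) (x ! j # K j) (x ! j # B j) *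
      folded_bond (K j) (B j) (K (Suc j)) (B (Suc j))" for j
  have j0: "j0 < l" "K j0 ! 0 \<noteq> B j0 ! 0" and lx: "length x = l"
    using odd p by (auto simp: differs_def configs_def)
  have factor: "folded_worldline (h j) (v j) (flip_at x j0 ! j # K j) (flip_at x j0 ! j # B j) *
      folded_bond (K j) (B j) (K (Suc j)) (B (Suc j)) = (if j = j0 then -1 else 1) * F j" if "j < l" for j
  proof (cases "j = j0")
    case True
    have "length (K j) = t" "length (B j) = t"
      using p that by (auto intro: length_path)
    then have "folded_worldline (h j) (v j) (flip_at (x ! j # K j) 0) (flip_at (x ! j # B j) 0)
        = - folded_worldline (h j) (v j) (x ! j # K j) (x ! j # B j)"
      using folded_worldline_flip[of "v j" "x ! j # B j" "x ! j # K j" 0, OF v] t j0 True by simp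
    moreover have "flip_at x j0 ! j # K j = flip_at (x ! j # K j) 0" "flip_at x j0 ! j # B j = flip_at (x ! j # B j) 0"
      using True lx that by (simp_all add: flip_at_def)
    ultimately show ?thesis
      using True by (simp add: F_def)
  next
    case False
    then show ?thesis using lx that by (simp add: F_def nth_flip_at)
  qed
  have "folded_weight h v l (flip_at x j0) K B = (\<Prod>j<l. (if j = j0 then -1 else 1) * F j)"
    unfolding folded_weight_def using factor by (intro prod.cong) auto
  also have "\<dots> = - folded_weight h v l x K B"
    using j0 by (simp add: prod.distrib prod.delta folded_weight_def F_def)
  finally show ?thesis .
qed

lemma folded_weight_flip_bulk:
  assumes v: "\<And>j a. v j a * cnj (v j a) = 1 / 2"
    and p: "(x, K, B) \<in> configs l \<times> paths t l \<alpha> \<beta> \<times> paths t l \<alpha>' \<beta>'"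
    and odd: "odd_vertex t l K B (Bulk q0 j0)"
  shows "folded_weight h v l x (K(j0 := flip_at (K j0) q0)) (B(j0 := flip_at (B j0) q0)) = - folded_weight h v l x K B"
proof -
  define K' where "K' = K(j0 := flip_at (K j0) q0)"
  define B' where "B' = B(j0 := flip_at (B j0) q0)"
  define F where "F j = folded_worldline (h j) (v j) (x ! j # K j) (x ! j # B j) *
      folded_bond (K j) (B j) (K (Suc j)) (B (Suc j))" for j
  define left where "left = flip_sign (differs K B (j0 - 1) q0)"
  define centre where "centre = flip_sign (differs K B (Suc j0) q0) *
      flip_sign (0 < q0 \<and> differs K B j0 (q0 - 1)) * flip_sign (Suc q0 < t \<and> differs K B j0 (Suc q0))"
  have q0: "q0 < t" "0 < j0" "j0 < l" "K j0 ! q0 = B j0 ! q0"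
    using odd by (auto simp: differs_def)
  have len: "length (K j) = t" "length (B j) = t" if "j \<le> l" for j
    using p that by (auto intro: length_path)
  have factor: "folded_worldline (h j) (v j) (x ! j # K' j) (x ! j # B' j) * folded_bond (K' j) (B' j) (K' (Suc j)) (B' (Suc j))
      = (if j = j0 - 1 then left else 1) * ((if j = j0 then centre else 1) * F j)" if j: "j < l" for j
  proof -
    consider "Suc j = j0" | "j = j0" | "j \<noteq> j0" "Suc j \<noteq> j0" by blast
    then show ?thesis
    proof cases
      case 1
      then have "j0 - 1 = j" by simp
      then have "folded_bond (K j) (B j) (flip_at (K j0) q0) (flip_at (B j0) q0) = left * folded_bond (K j) (B j) (K j0) (B j0)"
        using folded_bond_flip_right[of "K j" t "B j" "K j0" "B j0" q0] len[of j] len[of j0] q0 j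
        by (simp add: left_def differs_def)
      then show ?thesis
        using 1 by (auto simp: K'_def B'_def F_def)
    next
      case 2
      then show ?thesis
        using folded_site_flip[where v = "v j" and c = "K j" and c' = "B j" and d = "K (Suc j)" and d' = "B (Suc j)",
            OF v len[of j] len[of "Suc j"]] q0 j
        by (simp add: K'_def B'_def F_def centre_def differs_def)
    next
      case 3
      then show ?thesis by (simp add: K'_def B'_def F_def)
    qed
  qed
  have "folded_weight h v l x K' B' = (\<Prod>j<l. (if j = j0 - 1 then left else 1) * ((if j = j0 then centre else 1) * F j))"
    unfolding folded_weight_def using factor by (intro prod.cong) auto
  also have "\<dots> = left * centre * folded_weight h v l x K B"
    using q0 by (simp add: prod.distrib prod.delta folded_weight_def F_def)
  also have "left * centre = -1"
    using odd unfolding left_def centre_def by (intro flip_sign_xor3) simp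
  finally show ?thesis unfolding K'_def B'_def by (simp only: mult_minus1)
qed

lemma folded_weight_flip_vertex:
  assumes v: "\<And>j a. v j a * cnj (v j a) = 1 / 2" and t: "0 < t"
    and p: "(x, K, B) \<in> configs l \<times> paths t l \<alpha> \<beta> \<times> paths t l \<alpha>' \<beta>'"
    and odd: "odd_vertex t l K B w" and f: "flip_vertex w (x, K, B) = (x', K', B')"
  shows "folded_weight h v l x' K' B' = - folded_weight h v l x K B"
proof (cases w)
  case (Top j)
  then show ?thesis using folded_weight_flip_top[where v = v, OF v t p] odd f by auto
next
  case (Bulk q j)
  then show ?thesis using folded_weight_flip_bulk[where v = v, OF v p] odd f by auto
qed

lemma sum_folded_weight_diag:
  assumes v: "\<And>j a. v j a * cnj (v j a) = 1 / 2" and l: "1 \<le> l"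
    and \<alpha>: "\<alpha> \<in> configs t" and \<beta>: "\<beta> \<in> configs t"
  shows "(\<Sum>x\<in>configs l. \<Sum>K\<in>paths t l \<alpha> \<beta>. folded_weight h v l x K K) = 1 / 2 ^ t"
proof -
  obtain m where m: "l = Suc m" using l by (cases l) auto
  have "(\<Sum>x\<in>configs l. \<Sum>K\<in>paths t l \<alpha> \<beta>. folded_weight h v l x K K)
      = of_nat (card (configs l)) * of_nat (card (paths t l \<alpha> \<beta>)) * (1 / 2) ^ (Suc t * l)"
    by (simp add: folded_weight_diag[OF v])
  also have "\<dots> = 2 ^ (Suc m + t * m) * (1 / 2) ^ (Suc m + t * m) * (1 / 2) ^ t"
  proof -
    have "Suc t * Suc m = (Suc m + t * m) + t" by simp
    then show ?thesis
      unfolding m card_configs card_paths[OF \<alpha> \<beta>] by (simp only: power_add power_mult of_nat_power) (simp add: mult_ac)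
  qed
  also have "\<dots> = 1 / 2 ^ t"
    by (simp add: power_mult_distrib[symmetric] power_one_over)
  finally show ?thesis .
qed

lemma sum_folded_weight_odd:
  assumes v: "\<And>j a. v j a * cnj (v j a) = 1 / 2" and t: "0 < t"
  shows "(\<Sum>x\<in>configs l. \<Sum>(K, B)\<in>{(K, B) \<in> paths t l \<alpha> \<beta> \<times> paths t l \<alpha>' \<beta>'. \<exists>w. odd_vertex t l K B w}.
      folded_weight h v l x K B) = 0"
proof -
  define S where "S = configs l \<times> {(K, B) \<in> paths t l \<alpha> \<beta> \<times> paths t l \<alpha>' \<beta>'. \<exists>w. odd_vertex t l K B w}"
  define flip where "flip p = flip_vertex (SOME w. odd_vertex t l (fst (snd p)) (snd (snd p)) w) p" for p
  have "(\<Sum>(x, K, B)\<in>S. folded_weight h v l x K B) = 0"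
  proof (rule sum_involution_eq_0[where h = flip])
    fix p assume "p \<in> S"
    then obtain x K B where p: "p = (x, K, B)"
      and mem: "(x, K, B) \<in> configs l \<times> paths t l \<alpha> \<beta> \<times> paths t l \<alpha>' \<beta>'" and ex: "\<exists>w. odd_vertex t l K B w"
      unfolding S_def by auto
    define w where "w = (SOME w. odd_vertex t l K B w)"
    have w: "odd_vertex t l K B w"
      using ex unfolding w_def by (rule someI_ex)
    obtain x' K' B' where f: "flip_vertex w (x, K, B) = (x', K', B')"
      by (cases "flip_vertex w (x, K, B)")
    have flip_p: "flip (x, K, B) = (x', K', B')"
      using f by (simp add: flip_def w_def)
    have same: "odd_vertex t l K' B' = odd_vertex t l K B"
      by (rule odd_vertex_flip_vertex[OF t mem w f])
    show "(case flip p of (x, K, B) \<Rightarrow> folded_weight h v l x K B) + (case p of (x, K, B) \<Rightarrow> folded_weight h v l x K B) = 0"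
      using folded_weight_flip_vertex[where v = v, OF v t mem w f] unfolding p flip_p by simp
    show "flip p \<in> S"
      using flip_vertex_mem[OF mem w] w same unfolding p flip_p f S_def by auto
    have "flip (x', K', B') = flip_vertex w (x', K', B')"
      unfolding flip_def w_def by (simp add: same)
    then show "flip (flip p) = p"
      unfolding p flip_p f[symmetric] by simp
    show "flip p \<noteq> p"
      using flip_vertex_neq[OF mem w] unfolding p flip_p f .
  qed
  then show ?thesis
    unfolding S_def by (simp add: sum.cartesian_product)
qed

theorem segment_isometry_segment_amp:
  assumes v: "\<And>j a. v j a * cnj (v j a) = 1 / 2" and t: "1 \<le> t" and l: "2 * t \<le> l"
  shows "segment_isometry t l (segment_amp J b h v t)"
  unfolding segment_isometry_def
proof (intro ballI)
  fix \<alpha> \<beta> \<alpha>' \<beta>' assume \<alpha>\<beta>: "\<alpha> \<in> configs t" "\<beta> \<in> configs t" "\<alpha>' \<in> configs t" "\<beta>' \<in> configs t"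
  define PP where "PP = paths t l \<alpha> \<beta> \<times> paths t l \<alpha>' \<beta>'"
  define odd where "odd = {(K, B) \<in> PP. \<exists>w. odd_vertex t l K B w}"
  have "(K, B) \<in> PP - odd \<longleftrightarrow> K \<in> paths t l \<alpha> \<beta> \<inter> paths t l \<alpha>' \<beta>' \<and> B = K" for K B
    using ex_odd_vertex_iff[OF t l, of K \<alpha> \<beta> B \<alpha>' \<beta>'] unfolding odd_def PP_def by auto
  then have even: "PP - odd = (\<lambda>K. (K, K)) ` (paths t l \<alpha> \<beta> \<inter> paths t l \<alpha>' \<beta>')"
    by auto
  have "(\<Sum>x\<in>configs l. segment_amp J b h v t x \<alpha> \<beta> * cnj (segment_amp J b h v t x \<alpha>' \<beta>'))
      = (\<Sum>x\<in>configs l. \<Sum>(K, B)\<in>PP. folded_weight h v l x K B)"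
    unfolding PP_def by (intro sum.cong refl) (simp add: segment_amp_mult_cnj configs_def sum.cartesian_product)
  also have "\<dots> = (\<Sum>x\<in>configs l. \<Sum>(K, B)\<in>PP - odd. folded_weight h v l x K B)
      + (\<Sum>x\<in>configs l. \<Sum>(K, B)\<in>odd. folded_weight h v l x K B)"
    unfolding sum.distrib[symmetric] PP_def odd_def by (intro sum.cong refl sum.subset_diff) auto
  also have "(\<Sum>x\<in>configs l. \<Sum>(K, B)\<in>odd. folded_weight h v l x K B) = 0"
    unfolding odd_def PP_def using v t by (intro sum_folded_weight_odd) auto
  also have "(\<Sum>x\<in>configs l. \<Sum>(K, B)\<in>PP - odd. folded_weight h v l x K B)
      = (\<Sum>x\<in>configs l. \<Sum>K\<in>paths t l \<alpha> \<beta> \<inter> paths t l \<alpha>' \<beta>'. folded_weight h v l x K K)"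
    unfolding even by (simp add: sum.reindex inj_on_def)
  also have "\<dots> = (if \<alpha> = \<alpha>' \<and> \<beta> = \<beta>' then 1 / 2 ^ t else 0)"
  proof (cases "\<alpha> = \<alpha>' \<and> \<beta> = \<beta>'")
    case True
    then show ?thesis using sum_folded_weight_diag[OF v _ \<alpha>\<beta>(1,2)] t l by simp
  next
    case False
    then have "paths t l \<alpha> \<beta> \<inter> paths t l \<alpha>' \<beta>' = {}"
      unfolding paths_def by auto
    with False show ?thesis by simp
  qed
  finally show "(\<Sum>x\<in>configs l. segment_amp J b h v t x \<alpha> \<beta> * cnj (segment_amp J b h v t x \<alpha>' \<beta>'))
      = (if \<alpha> = \<alpha>' \<and> \<beta> = \<beta>' then 1 / 2 ^ t else 0)" by simp
qed

end

section \<open>Moments of the partially transposed state\<close>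

lemma site_amp_transverse_abs:
  "site_amp (\<lambda>_. pi / 2) (\<lambda>_. \<phi>) j a * cnj (site_amp (\<lambda>_. pi / 2) (\<lambda>_. \<phi>) j a) = 1 / 2"
proof -
  have "cos (pi / 2 / 2) = sqrt 2 / 2" "sin (pi / 2 / 2) = sqrt 2 / 2"
    using cos_45 sin_45 by simp_all
  note cs = this
  have c: "cos (pi / 2 / 2) * cos (pi / 2 / 2) = 1 / 2" and s: "sin (pi / 2 / 2) * sin (pi / 2 / 2) = 1 / 2"
    unfolding cs by simp_all
  have e: "exp (\<i> * complex_of_real \<phi>) * cnj (exp (\<i> * complex_of_real \<phi>)) = 1"
    by (simp add: exp_cnj exp_add[symmetric])
  have "site_amp (\<lambda>_. pi / 2) (\<lambda>_. \<phi>) j a * cnj (site_amp (\<lambda>_. pi / 2) (\<lambda>_. \<phi>) j a)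
      = (if a then 1 else exp (\<i> * complex_of_real \<phi>) * cnj (exp (\<i> * complex_of_real \<phi>))) *
        complex_of_real (if a then cos (pi / 2 / 2) * cos (pi / 2 / 2) else sin (pi / 2 / 2) * sin (pi / 2 / 2))"
    unfolding site_amp_def by (simp add: mult_ac)
  then show ?thesis unfolding c s e by simp
qed

interpretation self_dual_point: self_dual "pi / 4" "- pi / 4"
  by unfold_locales simp_all

theorem lemma1:
  fixes LA LB LC t n :: nat and h :: "nat \<Rightarrow> real" and \<phi> :: real
  assumes "t \<ge> 1" and "2 * t \<le> min LA (min LB LC)" and "n \<ge> 1"
    and "0 \<le> \<phi>" and "\<phi> \<le> 2 * pi"
  shows "Ln (mtrace (LA + LB)
            (mat_pow (LA + LB) (ptranspose_after LA (rhoAB LA LB LC (pi / 4) (- pi / 4) h \<phi> t)) (2 * n)))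
         = complex_of_real ((4 - 6 * real n) * real t * ln 2)"
proof -
  let ?v = "site_amp (\<lambda>_. pi / 2) (\<lambda>_. \<phi>)"
  let ?A = "segment_amp (pi / 4) (- pi / 4) h ?v t"
  let ?B = "segment_amp (pi / 4) (- pi / 4) (\<lambda>j. h (LA + j)) (\<lambda>j. ?v (LA + j)) t"
  let ?C = "segment_amp (pi / 4) (- pi / 4) (\<lambda>j. h (LA + LB + j)) (\<lambda>j. ?v (LA + LB + j)) t"
  let ?I = "configs t \<times> configs t \<times> configs t \<times> configs t"
  have L: "1 \<le> LA + LB + LC" using assms(1,2) by simp
  have card_I: "card ?I = 2 ^ (4 * t)"
    by (simp add: card_cartesian_product card_configs flip: power_add)
  have isometries: "segment_isometry t LA ?A" "segment_isometry t LB ?B" "segment_isometry t LC ?C"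
    by (rule self_dual_point.segment_isometry_segment_amp; use assms(1,2) site_amp_transverse_abs in simp)+
  have "ptranspose_after LA (rhoAB LA LB LC (pi / 4) (- pi / 4) h \<phi> t) x y =
      1 / 2 ^ t * (\<Sum>\<iota>\<in>?I. pt_ket LA ?A ?B \<iota> x * pt_bra LA ?A ?B \<iota> y)"
    if "x \<in> configs (LA + LB)" "y \<in> configs (LA + LB)" for x y
    unfolding rhoAB_def
    using floquet_power_prod_state_append3[OF L] isometries(3) that by (rule ptranspose_ptrace_tripartite)
  then have "mtrace (LA + LB) (mat_pow (LA + LB) (ptranspose_after LA (rhoAB LA LB LC (pi / 4) (- pi / 4) h \<phi> t)) (2 * n))
      = of_nat (card ?I) * (1 / 2 ^ t * (1 / 2 ^ t * (1 / 2 ^ t))) ^ (2 * n)"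
    using pt_bra_pt_ket_biorthogonal[OF isometries(1,2)] assms(3)
    by (intro mtrace_mat_pow_even_biorthogonal[where \<sigma> = "map_prod id (map_prod id prod.swap)"]) auto
  also have "\<dots> = complex_of_real (2 ^ (4 * t) / 2 ^ (6 * n * t))"
    by (simp add: card_I power_mult_distrib power_one_over flip: power_add power_mult mult.assoc)
      (simp add: mult_ac)
  also have "Ln \<dots> = complex_of_real (ln (2 ^ (4 * t) / 2 ^ (6 * n * t)))"
    by (rule Ln_of_real) simp
  also have "ln ((2::real) ^ (4 * t) / 2 ^ (6 * n * t)) = (4 - 6 * real n) * real t * ln 2"
    by (simp add: ln_div ln_realpow algebra_simps)
  finally show ?thesis .
qed

end
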